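(* Let $D$ and $\bar D$ be exact connections on vector bundles $E\to M$ and $\bar E\to\bar M$, and let $\pi:M\times\bar M\to M$ and $\bar\pi:M\times\bar M\to\bar M$ be the projections. Then $\pi^*D$ and $\bar\pi^*\bar D$ are exact connections on $\pi^*E$ and $\bar\pi^*\bar E$ over $M\times\bar M$. Moreover, $\pi^*D+\bar\pi^*\bar D$ is an exact connection on $\pi^*E\oplus\bar\pi^*\bar E$ over $M\times\bar M$.
   Context: For a connection $D$ on $E$: $D^\wedge$ is the exterior covariant derivative $\phi_b{}^\alpha\mapsto D_{[a}\phi_{b]}{}^\alpha$, $\kappa=D^\wedge\circ D$ the curvature (assumed of constant rank). $D$ is exact if every section $\phi$ of $\Lambda^1\otimes E$ with $D^\wedge\phi=\kappa(\psi)$ for some section $\psi$ of $E$ is of the form $D\eta$ for some section $\eta$ of $E$. Statements are local (on sufficiently small open sets). *)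

theory Defs
  imports "HOL-Analysis.Analysis"
begin

text \<open>Local model: a vector bundle of rank CARD('k) over an open set U of a
Euclidean space 'a, trivialised by a frame; sections are maps U -> real^'k.
Coordinate directions are the elements of Basis.\<close>

definition pd :: "'a::euclidean_space \<Rightarrow> ('a \<Rightarrow> real) \<Rightarrow> 'a \<Rightarrow> real" where
  "pd i f x = frechet_derivative f (at x) i"

fun Ck :: "nat \<Rightarrow> 'a::euclidean_space set \<Rightarrow> ('a \<Rightarrow> real) \<Rightarrow> bool" where
  "Ck 0 U f = continuous_on U f"
| "Ck (Suc k) U f = (f differentiable_on U \<and> (\<forall>i\<in>Basis. Ck k U (pd i f)))"

definition smooth :: "'a::euclidean_space set \<Rightarrow> ('a \<Rightarrow> real) \<Rightarrow> bool" where
  "smooth U f = (\<forall>k. Ck k U f)"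

definition smooth_sec :: "'a::euclidean_space set \<Rightarrow> ('a \<Rightarrow> real^'k) \<Rightarrow> bool" where
  "smooth_sec U \<eta> = (\<forall>\<alpha>. smooth U (\<lambda>x. \<eta> x $ \<alpha>))"

definition smooth_form :: "'a::euclidean_space set \<Rightarrow> ('a \<Rightarrow> 'a \<Rightarrow> real^'k) \<Rightarrow> bool" where
  "smooth_form U \<phi> = (\<forall>a\<in>Basis. smooth_sec U (\<lambda>x. \<phi> x a))"

definition smooth_connection :: "'a::euclidean_space set \<Rightarrow> ('a \<Rightarrow> 'a \<Rightarrow> real^'k^'k) \<Rightarrow> bool" where
  "smooth_connection U \<Gamma> = (\<forall>a\<in>Basis. \<forall>\<alpha> \<beta>. smooth U (\<lambda>x. \<Gamma> x a $ \<alpha> $ \<beta>))"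

definition pdv :: "'a::euclidean_space \<Rightarrow> ('a \<Rightarrow> real^'k) \<Rightarrow> 'a \<Rightarrow> real^'k" where
  "pdv i f x = (\<chi> \<alpha>. pd i (\<lambda>y. f y $ \<alpha>) x)"

definition pdm :: "'a::euclidean_space \<Rightarrow> ('a \<Rightarrow> real^'k^'k) \<Rightarrow> 'a \<Rightarrow> real^'k^'k" where
  "pdm i f x = (\<chi> \<alpha> \<beta>. pd i (\<lambda>y. f y $ \<alpha> $ \<beta>) x)"

definition Dconn :: "('a::euclidean_space \<Rightarrow> 'a \<Rightarrow> real^'k^'k) \<Rightarrow> ('a \<Rightarrow> real^'k) \<Rightarrow> 'a \<Rightarrow> 'a \<Rightarrow> real^'k" where
  "Dconn \<Gamma> \<eta> x a = pdv a \<eta> x + \<Gamma> x a *v \<eta> x"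

definition Dwedge :: "('a::euclidean_space \<Rightarrow> 'a \<Rightarrow> real^'k^'k) \<Rightarrow> ('a \<Rightarrow> 'a \<Rightarrow> real^'k) \<Rightarrow> 'a \<Rightarrow> 'a \<Rightarrow> 'a \<Rightarrow> real^'k" where
  "Dwedge \<Gamma> \<phi> x a b = (1/2) *\<^sub>R ((pdv a (\<lambda>y. \<phi> y b) x + \<Gamma> x a *v \<phi> x b)
                                  - (pdv b (\<lambda>y. \<phi> y a) x + \<Gamma> x b *v \<phi> x a))"

definition kappa :: "('a::euclidean_space \<Rightarrow> 'a \<Rightarrow> real^'k^'k) \<Rightarrow> ('a \<Rightarrow> real^'k) \<Rightarrow> 'a \<Rightarrow> 'a \<Rightarrow> 'a \<Rightarrow> real^'k" where
  "kappa \<Gamma> \<psi> = Dwedge \<Gamma> (Dconn \<Gamma> \<psi>)"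

text \<open>The curvature as a bundle map (tensor), i.e. D^\<and>(D\<psi>)_{ab} = curv_{ab} \<psi> written out;
  used to express the rank of \<kappa>.\<close>
definition curv :: "('a::euclidean_space \<Rightarrow> 'a \<Rightarrow> real^'k^'k) \<Rightarrow> 'a \<Rightarrow> 'a \<Rightarrow> 'a \<Rightarrow> real^'k^'k" where
  "curv \<Gamma> x a b = (1/2) *\<^sub>R (pdm a (\<lambda>y. \<Gamma> y b) x - pdm b (\<lambda>y. \<Gamma> y a) x
                                + \<Gamma> x a ** \<Gamma> x b - \<Gamma> x b ** \<Gamma> x a)"

definition curv_rank :: "('a::euclidean_space \<Rightarrow> 'a \<Rightarrow> real^'k^'k) \<Rightarrow> 'a \<Rightarrow> nat" where
  "curv_rank \<Gamma> x = CARD('k) - dim {v::real^'k. \<forall>a\<in>Basis. \<forall>b\<in>Basis. curv \<Gamma> x a b *v v = 0}"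

definition exact_connection :: "'a::euclidean_space set \<Rightarrow> ('a \<Rightarrow> 'a \<Rightarrow> real^'k^'k) \<Rightarrow> bool" where
  "exact_connection U \<Gamma> \<longleftrightarrow>
     smooth_connection U \<Gamma> \<and>
     (\<forall>x\<in>U. \<forall>y\<in>U. curv_rank \<Gamma> x = curv_rank \<Gamma> y) \<and>
     (\<forall>V \<phi> \<psi>. open V \<and> V \<subseteq> U \<and> smooth_form V \<phi> \<and> smooth_sec V \<psi> \<and>
        (\<forall>x\<in>V. \<forall>a\<in>Basis. \<forall>b\<in>Basis. Dwedge \<Gamma> \<phi> x a b = kappa \<Gamma> \<psi> x a b) \<longrightarrow>
        (\<forall>x\<in>V. \<exists>W. open W \<and> x \<in> W \<and> W \<subseteq> V \<and>
            (\<exists>\<eta>. smooth_sec W \<eta> \<and> (\<forall>y\<in>W. \<forall>a\<in>Basis. \<phi> y a = Dconn \<Gamma> \<eta> y a))))"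

definition pull_fst :: "('a::euclidean_space \<Rightarrow> 'a \<Rightarrow> real^'k^'k) \<Rightarrow> ('a \<times> 'b::euclidean_space) \<Rightarrow> ('a \<times> 'b) \<Rightarrow> real^'k^'k" where
  "pull_fst \<Gamma> z c = (if fst c \<in> Basis then \<Gamma> (fst z) (fst c) else 0)"

definition pull_snd :: "('b::euclidean_space \<Rightarrow> 'b \<Rightarrow> real^'l^'l) \<Rightarrow> ('a::euclidean_space \<times> 'b) \<Rightarrow> ('a \<times> 'b) \<Rightarrow> real^'l^'l" where
  "pull_snd \<Gamma> z c = (if snd c \<in> Basis then \<Gamma> (snd z) (snd c) else 0)"

definition sum_conn :: "('c \<Rightarrow> 'c \<Rightarrow> real^'k^'k) \<Rightarrow> ('c \<Rightarrow> 'c \<Rightarrow> real^'l^'l) \<Rightarrow> 'c \<Rightarrow> 'c \<Rightarrow> real^('k + 'l)^('k + 'l)" where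
  "sum_conn \<Gamma>1 \<Gamma>2 z c = (\<chi> i j. case (i, j) of
       (Inl \<alpha>, Inl \<beta>) \<Rightarrow> \<Gamma>1 z c $ \<alpha> $ \<beta>
     | (Inr \<alpha>, Inr \<beta>) \<Rightarrow> \<Gamma>2 z c $ \<alpha> $ \<beta>
     | _ \<Rightarrow> 0)"

end

theory Submission
  imports Defs
begin

text \<open>
  The pull-back \<open>\<pi>\<^sup>*D\<close> has connection form \<open>\<Gamma>(x)\<close> in horizontal directions and \<open>0\<close> in vertical
  ones, so its curvature is the pull-back of that of \<open>D\<close> and has the same constant rank.
  Suppose \<open>D\<^sup>\<and>\<phi> = \<kappa>(\<psi>)\<close> on a product neighbourhood \<open>A \<times> B\<close>. Since \<open>\<kappa>\<close> is tensorial and vanishes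
  on every pair of directions containing a vertical one, the vertical components of the equation
  say that the vertical part of \<open>\<phi>\<close> is closed along the fibres; by the Poincare lemma it is the
  vertical derivative of some \<open>\<theta>\<close>. Then \<open>\<phi> - (\<pi>\<^sup>*D)\<theta>\<close> has no vertical part, and the mixed
  components of the equation make its horizontal part constant along the fibres. Hence it is the
  pull-back of a form on \<open>A\<close> solving an equation of the same kind for \<open>D\<close>, which is exact.
  The second factor reduces to the first by swapping the factors; for the direct sum, the
  equation and its solutions split into the two blocks.
\<close>

section \<open>Partial derivatives and smoothness\<close>

lemma pd_has_derivative: "(f has_derivative f') (at x) \<Longrightarrow> pd i f x = f' i"
  unfolding pd_def using frechet_derivative_at by metis

lemma pd_cong_open:
  assumes "open V" "x \<in> V" "\<And>y. y \<in> V \<Longrightarrow> f y = g y"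
  shows "pd i f x = pd i g x"
proof -
  have "(f has_derivative f') (at x) \<longleftrightarrow> (g has_derivative f') (at x)" for f'
    using has_derivative_transform_within_open[of f f' x UNIV V g]
      has_derivative_transform_within_open[of g f' x UNIV V f] assms by auto
  then show ?thesis unfolding pd_def frechet_derivative_def by simp
qed

lemma pd_compose:
  assumes "f differentiable (at (m z))" "(m has_derivative m') (at z)"
  shows "pd i (\<lambda>z. f (m z)) z = frechet_derivative f (at (m z)) (m' i)"
proof -
  have "(f has_derivative frechet_derivative f (at (m z))) (at (m z))"
    using assms(1) frechet_derivative_works by blast
  from pd_has_derivative[OF has_derivative_compose[OF assms(2) this]] show ?thesis .
qed

lemma pd_compose_linear:
  assumes "bounded_linear T" "f differentiable (at (T z))"
  shows "pd c (\<lambda>z. f (T z)) z = pd (T c) f (T z)"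
  using pd_compose[OF assms(2) bounded_linear_imp_has_derivative[OF assms(1)]] unfolding pd_def .

lemma pd_compose_sum:
  assumes "f differentiable (at (m z))" "(m has_derivative m') (at z)"
  shows "pd i (\<lambda>z. f (m z)) z = (\<Sum>j\<in>Basis. pd j f (m z) * (m' i \<bullet> j))"
proof -
  let ?F = "frechet_derivative f (at (m z))"
  have lin: "linear ?F"
    using assms(1) frechet_derivative_works has_derivative_linear by blast
  have "pd i (\<lambda>z. f (m z)) z = ?F (\<Sum>j\<in>Basis. (m' i \<bullet> j) *\<^sub>R j)"
    by (simp add: pd_compose[OF assms] euclidean_representation)
  also have "\<dots> = (\<Sum>j\<in>Basis. (m' i \<bullet> j) * ?F j)"
    by (simp add: linear_sum[OF lin] linear_cmul[OF lin])
  finally show ?thesis unfolding pd_def by (simp add: mult.commute)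
qed

lemma pd_const: "pd i (\<lambda>x. c) x = 0"
  using pd_has_derivative[OF has_derivative_const] .

lemma pd_zero: "f differentiable (at x) \<Longrightarrow> pd 0 f x = 0"
  unfolding pd_def using frechet_derivative_works has_derivative_linear linear_0 by blast

lemma pd_eq_sum_Basis:
  assumes "f differentiable (at x)"
  shows "pd u f x = (\<Sum>b\<in>Basis. (u \<bullet> b) * pd b f x)"
  using pd_compose_sum[of f "\<lambda>x. x" x "\<lambda>h. h" u] assms by (simp add: mult.commute)

lemma pd_add:
  "f differentiable (at x) \<Longrightarrow> g differentiable (at x) \<Longrightarrow>
   pd i (\<lambda>x. f x + g x) x = pd i f x + pd i g x"
proof -
  assume "f differentiable (at x)" "g differentiable (at x)"
  then obtain f' g' where "(f has_derivative f') (at x)" "(g has_derivative g') (at x)"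
    unfolding differentiable_def by blast
  then show ?thesis using has_derivative_add pd_has_derivative by metis
qed

lemma pd_diff:
  "f differentiable (at x) \<Longrightarrow> g differentiable (at x) \<Longrightarrow>
   pd i (\<lambda>x. f x - g x) x = pd i f x - pd i g x"
proof -
  assume "f differentiable (at x)" "g differentiable (at x)"
  then obtain f' g' where "(f has_derivative f') (at x)" "(g has_derivative g') (at x)"
    unfolding differentiable_def by blast
  then show ?thesis using has_derivative_diff pd_has_derivative by metis
qed

lemma pd_mult:
  "f differentiable (at x) \<Longrightarrow> g differentiable (at x) \<Longrightarrow>
   pd i (\<lambda>x. f x * g x) x = f x * pd i g x + pd i f x * g x"
proof -
  assume "f differentiable (at x)" "g differentiable (at x)"
  then obtain f' g' where f': "(f has_derivative f') (at x)" and g': "(g has_derivative g') (at x)"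
    unfolding differentiable_def by blast
  show ?thesis using pd_has_derivative[OF has_derivative_mult[OF f' g']] f' g' pd_has_derivative by metis
qed

lemma pd_sum:
  "finite A \<Longrightarrow> (\<And>j. j \<in> A \<Longrightarrow> f j differentiable (at x)) \<Longrightarrow>
   pd i (\<lambda>x. \<Sum>j\<in>A. f j x) x = (\<Sum>j\<in>A. pd i (f j) x)"
proof (induction A rule: finite_induct)
  case empty thus ?case by (simp add: pd_const)
next
  case (insert a A)
  have "(\<lambda>x. \<Sum>j\<in>A. f j x) differentiable (at x)"
    using insert by (intro differentiable_sum) auto
  then show ?case using insert pd_add[of "f a" x "\<lambda>x. \<Sum>j\<in>A. f j x" i] by simp
qed

lemma has_real_derivative_pd_line:
  assumes "f differentiable (at (a + t *\<^sub>R v))"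
  shows "((\<lambda>t. f (a + t *\<^sub>R v)) has_real_derivative pd v f (a + t *\<^sub>R v)) (at t)"
proof -
  let ?F = "frechet_derivative f (at (a + t *\<^sub>R v))"
  have F: "(f has_derivative ?F) (at (a + t *\<^sub>R v))"
    using assms frechet_derivative_works by blast
  have "((\<lambda>t. a + t *\<^sub>R v) has_derivative (\<lambda>h. h *\<^sub>R v)) (at t)"
    by (auto intro!: derivative_eq_intros)
  from has_derivative_compose[OF this F]
  have "((\<lambda>t. f (a + t *\<^sub>R v)) has_derivative (\<lambda>h. ?F (h *\<^sub>R v))) (at t)" .
  moreover have "(\<lambda>h. ?F (h *\<^sub>R v)) = (\<lambda>h. pd v f (a + t *\<^sub>R v) * h)"
    using linear_cmul[OF has_derivative_linear[OF F]] unfolding pd_def by (auto simp: mult.commute)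
  ultimately show ?thesis by (simp add: has_field_derivative_def)
qed

lemma differentiable_on_cong_open:
  "open V \<Longrightarrow> (\<And>y. y \<in> V \<Longrightarrow> f y = g y) \<Longrightarrow> f differentiable_on V \<Longrightarrow> g differentiable_on V"
  unfolding differentiable_on_eq_differentiable_at differentiable_def
  using has_derivative_transform_within_open[of f _ _ UNIV V g] by blast

lemma Ck_cong_open: "open V \<Longrightarrow> (\<And>y. y \<in> V \<Longrightarrow> f y = g y) \<Longrightarrow> Ck k V f \<Longrightarrow> Ck k V g"
proof (induction k arbitrary: f g)
  case 0 thus ?case using continuous_on_cong by force
next
  case (Suc k)
  have "Ck k V (pd i g)" if "i \<in> Basis" for i
  proof -
    have "Ck k V (pd i f)" using Suc.prems that by auto
    moreover have "\<And>y. y \<in> V \<Longrightarrow> pd i f y = pd i g y"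
      using pd_cong_open[of V _ f g] Suc.prems by blast
    ultimately show ?thesis using Suc.IH Suc.prems(1) by blast
  qed
  moreover have "g differentiable_on V"
    using differentiable_on_cong_open[OF Suc.prems(1,2)] Suc.prems(3) by simp
  ultimately show ?case by simp
qed

lemma Ck_SucD: "Ck (Suc k) V f \<Longrightarrow> Ck k V f"
proof (induction k arbitrary: f)
  case 0 thus ?case by (simp add: differentiable_imp_continuous_on)
next
  case (Suc k) thus ?case by auto
qed

lemma Ck_subset: "Ck k V f \<Longrightarrow> W \<subseteq> V \<Longrightarrow> Ck k W f"
  by (induction k arbitrary: f) (auto intro: continuous_on_subset differentiable_on_subset)

lemma Ck_const: "Ck k V (\<lambda>x. c)"
proof (induction k arbitrary: c)
  case 0 then show ?case by simp
next
  case (Suc k)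
  have "pd i (\<lambda>x. c) = (\<lambda>x::'a. 0)" for i by (rule ext, rule pd_const)
  then show ?case using Suc by simp
qed

lemma Ck_add: "open V \<Longrightarrow> Ck k V f \<Longrightarrow> Ck k V g \<Longrightarrow> Ck k V (\<lambda>x. f x + g x)"
proof (induction k arbitrary: f g)
  case 0 thus ?case by (auto intro: continuous_on_add)
next
  case (Suc k)
  have d: "\<And>x. x \<in> V \<Longrightarrow> f differentiable (at x) \<and> g differentiable (at x)"
    using Suc.prems differentiable_on_eq_differentiable_at by auto
  have "(\<lambda>x. f x + g x) differentiable_on V" using Suc.prems by (auto intro: differentiable_on_add)
  moreover have "Ck k V (pd i (\<lambda>x. f x + g x))" if "i \<in> Basis" for i
  proof (rule Ck_cong_open[OF Suc.prems(1)])
    show "Ck k V (\<lambda>x. pd i f x + pd i g x)" using Suc that by auto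
    show "\<And>y. y \<in> V \<Longrightarrow> pd i f y + pd i g y = pd i (\<lambda>x. f x + g x) y"
      using d pd_add by metis
  qed
  ultimately show ?case by simp
qed

lemma Ck_mult: "open V \<Longrightarrow> Ck k V f \<Longrightarrow> Ck k V g \<Longrightarrow> Ck k V (\<lambda>x. f x * g x)"
proof (induction k arbitrary: f g)
  case 0 thus ?case by (auto intro: continuous_on_mult)
next
  case (Suc k)
  have d: "\<And>x. x \<in> V \<Longrightarrow> f differentiable (at x) \<and> g differentiable (at x)"
    using Suc.prems differentiable_on_eq_differentiable_at by auto
  have "(\<lambda>x. f x * g x) differentiable_on V" using Suc.prems by (auto intro: differentiable_on_mult)
  moreover have "Ck k V (pd i (\<lambda>x. f x * g x))" if "i \<in> Basis" for i
  proof (rule Ck_cong_open[OF Suc.prems(1)])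
    have "Ck k V f" "Ck k V g" using Suc.prems Ck_SucD by blast+
    then show "Ck k V (\<lambda>x. f x * pd i g x + pd i f x * g x)" using Suc that
      by (intro Ck_add) auto
    show "\<And>y. y \<in> V \<Longrightarrow> f y * pd i g y + pd i f y * g y = pd i (\<lambda>x. f x * g x) y"
      using d pd_mult by metis
  qed
  ultimately show ?case by simp
qed

lemma Ck_sum: "open V \<Longrightarrow> (\<And>j. j \<in> A \<Longrightarrow> Ck k V (f j)) \<Longrightarrow> Ck k V (\<lambda>x. \<Sum>j\<in>A. f j x)"
proof (induction A rule: infinite_finite_induct)
  case (insert a A) thus ?case by (simp add: Ck_add)
qed (simp_all add: Ck_const)

lemma smooth_subset: "smooth V f \<Longrightarrow> W \<subseteq> V \<Longrightarrow> smooth W f"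
  unfolding smooth_def using Ck_subset by blast

lemma smooth_pd: "smooth V f \<Longrightarrow> i \<in> Basis \<Longrightarrow> smooth V (pd i f)"
  unfolding smooth_def by (metis Ck.simps(2))

lemma smooth_imp_differentiable_on: "smooth V f \<Longrightarrow> f differentiable_on V"
  unfolding smooth_def by (metis Ck.simps(2))

lemma smooth_imp_differentiable: "smooth V f \<Longrightarrow> open V \<Longrightarrow> x \<in> V \<Longrightarrow> f differentiable (at x)"
  using smooth_imp_differentiable_on[of V f] differentiable_on_eq_differentiable_at[of V f] by simp

lemma smooth_imp_continuous_on: "smooth V f \<Longrightarrow> continuous_on V f"
  unfolding smooth_def by (metis Ck.simps(1))

lemma smooth_const: "smooth V (\<lambda>x. c)"
  unfolding smooth_def using Ck_const by blast

lemma smooth_add: "open V \<Longrightarrow> smooth V f \<Longrightarrow> smooth V g \<Longrightarrow> smooth V (\<lambda>x. f x + g x)"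
  unfolding smooth_def using Ck_add by blast

lemma smooth_mult: "open V \<Longrightarrow> smooth V f \<Longrightarrow> smooth V g \<Longrightarrow> smooth V (\<lambda>x. f x * g x)"
  unfolding smooth_def using Ck_mult by blast

lemma smooth_diff: "open V \<Longrightarrow> smooth V f \<Longrightarrow> smooth V g \<Longrightarrow> smooth V (\<lambda>x. f x - g x)"
proof -
  assume "open V" "smooth V f" "smooth V g"
  then have "smooth V (\<lambda>x. f x + (-1) * g x)" using smooth_add smooth_mult smooth_const by blast
  then show ?thesis by simp
qed

lemma smooth_sum: "open V \<Longrightarrow> (\<And>j. j \<in> A \<Longrightarrow> smooth V (f j)) \<Longrightarrow> smooth V (\<lambda>x. \<Sum>j\<in>A. f j x)"
proof (induction A rule: infinite_finite_induct)
  case (insert a A) thus ?case by (simp add: smooth_add)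
qed (simp_all add: smooth_const)

lemma smooth_bounded_linear: "bounded_linear (l :: 'a::euclidean_space \<Rightarrow> real) \<Longrightarrow> smooth V l"
proof -
  assume l: "bounded_linear l"
  have "Ck k V l" for k
  proof (cases k)
    case 0 then show ?thesis using l by (simp add: linear_continuous_on)
  next
    case (Suc k')
    have "pd i l = (\<lambda>x. l i)" for i
      by (rule ext, rule pd_has_derivative, rule bounded_linear_imp_has_derivative[OF l])
    then show ?thesis using Suc l by (simp add: Ck_const bounded_linear_imp_differentiable_on)
  qed
  then show ?thesis unfolding smooth_def by blast
qed

lemma Ck_compose:
  fixes m :: "'d::euclidean_space \<Rightarrow> 'c::euclidean_space"
  assumes Q: "open Q" and V: "open V" and mO: "m ` Q \<subseteq> V"
    and md: "\<And>z. z \<in> Q \<Longrightarrow> (m has_derivative m' z) (at z)"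
    and ms: "\<And>i j. i \<in> Basis \<Longrightarrow> j \<in> Basis \<Longrightarrow> smooth Q (\<lambda>z. m' z i \<bullet> j)"
  shows "Ck k V f \<Longrightarrow> Ck k Q (\<lambda>z. f (m z))"
proof (induction k arbitrary: f)
  case 0
  have "continuous_on Q m"
    using md has_derivative_continuous continuous_at_imp_continuous_on by blast
  then show ?case using 0 mO by (auto intro: continuous_on_compose2)
next
  case (Suc k)
  have fd: "f differentiable (at (m z))" if "z \<in> Q" for z
    using Suc.prems mO that V differentiable_on_eq_differentiable_at by auto
  have "(\<lambda>z. f (m z)) differentiable_on Q"
    unfolding differentiable_on_eq_differentiable_at[OF Q]
  proof
    fix z assume z: "z \<in> Q"
    have "m differentiable (at z)" using md[OF z] differentiable_def by blast
    then show "(\<lambda>z. f (m z)) differentiable (at z)"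
      using differentiable_chain_at[of m z f] fd[OF z] by (simp add: o_def)
  qed
  moreover have "Ck k Q (pd i (\<lambda>z. f (m z)))" if i: "i \<in> Basis" for i
  proof (rule Ck_cong_open[OF Q])
    show "Ck k Q (\<lambda>z. \<Sum>j\<in>Basis. pd j f (m z) * (m' z i \<bullet> j))"
    proof (rule Ck_sum[OF Q])
      fix j :: 'c assume j: "j \<in> Basis"
      have "Ck k Q (\<lambda>z. pd j f (m z))" using Suc j by auto
      moreover have "Ck k Q (\<lambda>z. m' z i \<bullet> j)" using ms[OF i j] unfolding smooth_def by blast
      ultimately show "Ck k Q (\<lambda>z. pd j f (m z) * (m' z i \<bullet> j))" by (rule Ck_mult[OF Q])
    qed
    show "(\<Sum>j\<in>Basis. pd j f (m z) * (m' z i \<bullet> j)) = pd i (\<lambda>z. f (m z)) z" if "z \<in> Q" for z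
      using pd_compose_sum[OF fd[OF that] md[OF that]] by simp
  qed
  ultimately show ?case by simp
qed

lemma smooth_compose:
  fixes m :: "'d::euclidean_space \<Rightarrow> 'c::euclidean_space"
  assumes "open Q" "open V" "m ` Q \<subseteq> V"
    "\<And>z. z \<in> Q \<Longrightarrow> (m has_derivative m' z) (at z)"
    "\<And>i j. i \<in> Basis \<Longrightarrow> j \<in> Basis \<Longrightarrow> smooth Q (\<lambda>z. m' z i \<bullet> j)"
    "smooth V f"
  shows "smooth Q (\<lambda>z. f (m z))"
  using Ck_compose[OF assms(1-5)] assms(6) unfolding smooth_def by blast

lemma smooth_compose_linear:
  fixes m :: "'d::euclidean_space \<Rightarrow> 'c::euclidean_space"
  assumes "open Q" "open V" "m ` Q \<subseteq> V" "bounded_linear m" "smooth V f"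
  shows "smooth Q (\<lambda>z. f (m z))"
  by (rule smooth_compose[OF assms(1-3), of "\<lambda>z. m"])
     (auto intro: bounded_linear_imp_has_derivative[OF assms(4)] smooth_const assms(5))

section \<open>Symmetry of second derivatives\<close>

lemma has_integral_pd_line:
  assumes V: "open V" and f: "smooth V f" and "a \<le> t"
    and line: "\<And>\<tau>. \<tau> \<in> {a..t} \<Longrightarrow> p + \<tau> *\<^sub>R v \<in> V"
  shows "((\<lambda>\<tau>. pd v f (p + \<tau> *\<^sub>R v)) has_integral f (p + t *\<^sub>R v) - f (p + a *\<^sub>R v)) {a..t}"
proof (rule fundamental_theorem_of_calculus[OF \<open>a \<le> t\<close>])
  fix \<tau> assume "\<tau> \<in> {a..t}"
  then have "f differentiable (at (p + \<tau> *\<^sub>R v))"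
    using smooth_imp_differentiable[OF f V] line by blast
  from has_real_derivative_pd_line[OF this]
  show "((\<lambda>\<tau>. f (p + \<tau> *\<^sub>R v)) has_vector_derivative pd v f (p + \<tau> *\<^sub>R v)) (at \<tau> within {a..t})"
    unfolding has_real_derivative_iff_has_vector_derivative by (rule has_vector_derivative_at_within)
qed

lemma has_real_derivative_integral_line:
  assumes V: "open V" and g: "smooth V g" and i: "i \<in> Basis"
    and rect: "\<And>s \<tau>. s \<in> {-d<..<d} \<Longrightarrow> \<tau> \<in> {a..t} \<Longrightarrow> p + s *\<^sub>R i + \<tau> *\<^sub>R v \<in> V"
    and s0: "s0 \<in> {-d<..<d}"
  shows "((\<lambda>s. integral {a..t} (\<lambda>\<tau>. g (p + s *\<^sub>R i + \<tau> *\<^sub>R v))) has_real_derivative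
           integral {a..t} (\<lambda>\<tau>. pd i g (p + s0 *\<^sub>R i + \<tau> *\<^sub>R v))) (at s0)"
proof -
  let ?S = "{-d<..<d}"
  define q where "q s \<tau> = p + s *\<^sub>R i + \<tau> *\<^sub>R v" for s \<tau>
  have q_cont: "continuous_on S (\<lambda>(s, \<tau>). q s \<tau>)" for S
    unfolding q_def by (auto intro!: continuous_intros simp: split_beta)
  have q_eq: "q s \<tau> = (p + \<tau> *\<^sub>R v) + s *\<^sub>R i" for s \<tau>
    unfolding q_def by (simp add: add_ac)
  have "((\<lambda>s. integral (cbox a t) (\<lambda>\<tau>. g (q s \<tau>))) has_field_derivative
          integral (cbox a t) (\<lambda>\<tau>. pd i g (q s0 \<tau>))) (at s0 within ?S)"
  proof (rule leibniz_rule_field_derivative[where f="\<lambda>s \<tau>. g (q s \<tau>)"])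
    fix s \<tau> assume "s \<in> ?S" "\<tau> \<in> cbox a t"
    then have "q s \<tau> \<in> V" using rect unfolding q_def by simp
    then have "g differentiable (at ((p + \<tau> *\<^sub>R v) + s *\<^sub>R i))"
      using smooth_imp_differentiable[OF g V] q_eq by metis
    from has_real_derivative_pd_line[OF this]
    show "((\<lambda>s. g (q s \<tau>)) has_field_derivative pd i g (q s \<tau>)) (at s within ?S)"
      unfolding q_eq by (rule has_field_derivative_at_within)
  next
    fix s assume "s \<in> ?S"
    then have "continuous_on (cbox a t) (\<lambda>\<tau>. g (q s \<tau>))"
      using rect unfolding q_def
      by (intro continuous_on_compose2[OF smooth_imp_continuous_on[OF g]]) (auto intro!: continuous_intros)
    then show "(\<lambda>\<tau>. g (q s \<tau>)) integrable_on cbox a t"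
      by (rule integrable_continuous)
  next
    have "(\<lambda>(s, \<tau>). q s \<tau>) ` (?S \<times> cbox a t) \<subseteq> V"
      using rect by (auto simp: q_def cbox_interval)
    from continuous_on_compose2[OF smooth_imp_continuous_on[OF smooth_pd[OF g i]] q_cont this]
    show "continuous_on (?S \<times> cbox a t) (\<lambda>(s, \<tau>). pd i g (q s \<tau>))"
      by (simp add: split_beta)
  qed (use s0 in auto)
  then show ?thesis
    using s0 by (simp add: q_def at_within_open[OF _ open_greaterThanLessThan])
qed

lemma pd_line_diff_eq_integral:
  assumes V: "open V" and f: "smooth V f" and ij: "i \<in> Basis" "j \<in> Basis"
    and box: "\<And>s t. s \<in> {-d..d} \<Longrightarrow> t \<in> {-d..d} \<Longrightarrow> x + s *\<^sub>R i + t *\<^sub>R j \<in> V"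
    and s: "s \<in> {-d<..<d}" and t: "t \<in> {-d..d}"
  shows "pd i f (x + s *\<^sub>R i + t *\<^sub>R j) - pd i f (x + s *\<^sub>R i + (-d) *\<^sub>R j)
         = integral {-d..t} (\<lambda>\<tau>. pd i (pd j f) (x + s *\<^sub>R i + \<tau> *\<^sub>R j))"
proof -
  define p where "p s t = x + s *\<^sub>R i + t *\<^sub>R j" for s t
  have s_line: "((\<lambda>s. f (p s t)) has_real_derivative pd i f (p s t)) (at s)"
    if "s \<in> {-d..d}" "t \<in> {-d..d}" for s t
  proof -
    have p_eq: "p s t = (x + t *\<^sub>R j) + s *\<^sub>R i" for s by (simp add: p_def add_ac)
    have "f differentiable (at ((x + t *\<^sub>R j) + s *\<^sub>R i))"
      using smooth_imp_differentiable[OF f V] box[OF that] p_eq by (metis p_def)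
    from has_real_derivative_pd_line[OF this] show ?thesis unfolding p_eq .
  qed
  have "((\<lambda>s. f (p s t) - f (p s (-d))) has_real_derivative
          integral {-d..t} (\<lambda>\<tau>. pd i (pd j f) (p s \<tau>))) (at s)"
  proof (rule has_field_derivative_transform_within_open[OF _ open_greaterThanLessThan s])
    show "((\<lambda>s. integral {-d..t} (\<lambda>\<tau>. pd j f (x + s *\<^sub>R i + \<tau> *\<^sub>R j))) has_real_derivative
            integral {-d..t} (\<lambda>\<tau>. pd i (pd j f) (p s \<tau>))) (at s)"
      unfolding p_def using s t box
      by (intro has_real_derivative_integral_line[OF V smooth_pd[OF f ij(2)] ij(1)]) auto
    fix s' assume s': "s' \<in> {-d<..<d}"
    have "x + s' *\<^sub>R i + \<tau> *\<^sub>R j \<in> V" if "\<tau> \<in> {-d..t}" for \<tau>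
      using box[of s' \<tau>] s' t that by simp
    from has_integral_pd_line[OF V f _ this, of "-d" t] t
    show "integral {-d..t} (\<lambda>\<tau>. pd j f (x + s' *\<^sub>R i + \<tau> *\<^sub>R j)) = f (p s' t) - f (p s' (-d))"
      by (simp add: p_def integral_unique)
  qed
  moreover have "((\<lambda>s. f (p s t) - f (p s (-d))) has_real_derivative
                   pd i f (p s t) - pd i f (p s (-d))) (at s)"
    using s t by (intro DERIV_diff s_line) auto
  ultimately show ?thesis using DERIV_unique unfolding p_def by blast
qed

text \<open>Schwarz's theorem: differentiate the identity of \<open>pd_line_diff_eq_integral\<close> in \<open>t\<close> at \<open>0\<close>.\<close>
lemma pd_commute:
  assumes V: "open V" "x \<in> V" and f: "smooth V f" and ij: "i \<in> Basis" "j \<in> Basis"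
  shows "pd i (pd j f) x = pd j (pd i f) x"
proof -
  obtain e where e: "e > 0" "ball x e \<subseteq> V" using V openE by blast
  define d where "d = e / 3"
  have d: "d > 0" using e d_def by auto
  have box: "x + s *\<^sub>R i + t *\<^sub>R j \<in> V" if "s \<in> {-d..d}" "t \<in> {-d..d}" for s t
  proof -
    have "norm (s *\<^sub>R i + t *\<^sub>R j) \<le> \<bar>s\<bar> + \<bar>t\<bar>"
      using norm_triangle_ineq[of "s *\<^sub>R i" "t *\<^sub>R j"] ij by simp
    also have "\<dots> < e" using that d_def e by auto
    finally have "x + (s *\<^sub>R i + t *\<^sub>R j) \<in> ball x e"
      by (metis add.right_neutral dist_add_cancel dist_0_norm mem_ball)
    then show ?thesis using e by (auto simp: add.assoc)
  qed
  have "pd i f differentiable (at (x + 0 *\<^sub>R j))"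
    using smooth_imp_differentiable[OF smooth_pd[OF f ij(1)] V] by simp
  from DERIV_diff[OF has_real_derivative_pd_line[OF this] DERIV_const]
  have "((\<lambda>t. pd i f (x + t *\<^sub>R j) - pd i f (x + (-d) *\<^sub>R j)) has_real_derivative pd j (pd i f) x) (at 0)"
    by simp
  moreover have "((\<lambda>t. pd i f (x + t *\<^sub>R j) - pd i f (x + (-d) *\<^sub>R j)) has_real_derivative pd i (pd j f) x) (at 0)"
  proof (rule has_field_derivative_transform_within_open[OF _ open_greaterThanLessThan[of "-d" d]])
    have "continuous_on {-d..d} (\<lambda>\<tau>. pd i (pd j f) (x + \<tau> *\<^sub>R j))"
      using box[of 0] d
      by (intro continuous_on_compose2[OF smooth_imp_continuous_on[OF smooth_pd[OF smooth_pd[OF f ij(2)] ij(1)]]])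
         (auto intro!: continuous_intros)
    from integral_has_real_derivative[OF this, of 0]
    show "((\<lambda>t. integral {-d..t} (\<lambda>\<tau>. pd i (pd j f) (x + \<tau> *\<^sub>R j))) has_real_derivative pd i (pd j f) x) (at 0)"
      using d by (simp add: at_within_interior[of 0 "{-d..d}"])
    show "integral {-d..t} (\<lambda>\<tau>. pd i (pd j f) (x + \<tau> *\<^sub>R j)) = pd i f (x + t *\<^sub>R j) - pd i f (x + (-d) *\<^sub>R j)"
      if "t \<in> {-d<..<d}" for t
      using pd_line_diff_eq_integral[OF V(1) f ij box, where s=0 and t=t] d that by simp
  qed (use d in auto)
  ultimately show ?thesis using DERIV_unique by metis
qed

section \<open>Differentiation under the integral sign\<close>

lemma has_derivative_partial_fst:
  assumes "g differentiable (at (z, s))"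
  shows "((\<lambda>z. g (z, s)) has_derivative (\<lambda>h. frechet_derivative g (at (z, s)) (h, 0))) (at z)"
proof -
  have "((\<lambda>z. (z, s)) has_derivative (\<lambda>h. (h, 0))) (at z)"
    by (auto intro!: derivative_eq_intros)
  from has_derivative_compose[OF this assms[unfolded frechet_derivative_works]] show ?thesis .
qed

lemma continuous_on_partial_fst_blinfun:
  fixes g :: "'c::euclidean_space \<times> 'd::euclidean_space \<Rightarrow> real"
  assumes Q: "open Q" and g: "smooth Q g" and S: "S \<subseteq> Q"
  shows "continuous_on S (\<lambda>(z, s). Blinfun (\<lambda>h. frechet_derivative g (at (z, s)) (h, 0)))"
proof (rule continuous_on_blinfun_componentwise)
  fix i :: 'c assume "i \<in> Basis"
  then have "(i, 0) \<in> (Basis :: ('c \<times> 'd) set)" by (simp add: Basis_prod_def)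
  then have "continuous_on S (pd (i, 0) g)"
    using continuous_on_subset[OF smooth_imp_continuous_on[OF smooth_pd[OF g]] S] by blast
  moreover have "blinfun_apply (Blinfun (\<lambda>h. frechet_derivative g (at w) (h, 0))) i = pd (i, 0) g w"
    if "w \<in> S" for w
  proof -
    have "g differentiable (at (fst w, snd w))" using smooth_imp_differentiable[OF g Q] S that by simp blast
    from has_derivative_bounded_linear[OF has_derivative_partial_fst[OF this]]
    show ?thesis by (simp add: bounded_linear_Blinfun_apply pd_def)
  qed
  ultimately show "continuous_on S (\<lambda>w. blinfun_apply ((\<lambda>(z, s). Blinfun (\<lambda>h. frechet_derivative g (at (z, s)) (h, 0))) w) i)"
    by (simp add: continuous_on_eq split_beta)
qed

lemma has_derivative_integral_param:
  fixes g :: "'c::euclidean_space \<times> real \<Rightarrow> real"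
  assumes Q: "open Q" and V: "open V" and VQ: "V \<times> {0..1} \<subseteq> Q" and g: "smooth Q g" and x: "x \<in> V"
  shows "((\<lambda>z. integral {0..1} (\<lambda>s. g (z, s))) has_derivative
           (\<lambda>h. integral {0..1} (\<lambda>s. frechet_derivative g (at (x, s)) (h, 0)))) (at x)"
proof -
  obtain r where r: "r > 0" "ball x r \<subseteq> V" using V x openE by blast
  let ?U = "ball x r"
  define g' where "g' z s = Blinfun (\<lambda>h. frechet_derivative g (at (z, s)) (h, 0))" for z s
  have UQ: "?U \<times> cbox 0 1 \<subseteq> Q" using r VQ by (auto simp: cbox_interval)
  have g_diff: "g differentiable (at (z, s))" if "z \<in> ?U" "s \<in> cbox 0 1" for z s
    using smooth_imp_differentiable[OF g Q] UQ that by blast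
  have g'_apply: "blinfun_apply (g' z s) = (\<lambda>h. frechet_derivative g (at (z, s)) (h, 0))"
    if "z \<in> ?U" "s \<in> cbox 0 1" for z s
    unfolding g'_def
    by (intro bounded_linear_Blinfun_apply has_derivative_bounded_linear[OF has_derivative_partial_fst[OF g_diff[OF that]]])
  have g'_cont: "continuous_on (?U \<times> cbox 0 1) (\<lambda>(z, s). g' z s)"
    unfolding g'_def by (rule continuous_on_partial_fst_blinfun[OF Q g UQ])
  have "((\<lambda>z. integral (cbox 0 1) (\<lambda>s. g (z, s))) has_derivative blinfun_apply (integral (cbox 0 1) (g' x)))
          (at x within ?U)"
  proof (rule leibniz_rule[where f="\<lambda>z s. g (z, s)", OF _ _ g'_cont _ convex_ball])
    fix z s assume "z \<in> ?U" "s \<in> cbox (0::real) 1"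
    then show "((\<lambda>z. g (z, s)) has_derivative blinfun_apply (g' z s)) (at z within ?U)"
      using has_derivative_partial_fst[OF g_diff] g'_apply has_derivative_at_withinI by metis
  next
    fix z assume "z \<in> ?U"
    then have "continuous_on (cbox 0 1) (\<lambda>s. g (z, s))"
      using UQ by (intro continuous_on_compose2[OF smooth_imp_continuous_on[OF g]]) (auto intro!: continuous_intros)
    then show "(\<lambda>s. g (z, s)) integrable_on cbox 0 1" by (rule integrable_continuous)
  qed (use r in auto)
  moreover have "at x within ?U = at x" using r by (intro at_within_open) auto
  moreover have "continuous_on (cbox 0 1) (\<lambda>s. (\<lambda>(z, s). g' z s) (x, s))"
    by (rule continuous_on_compose2[OF g'_cont]) (use r in \<open>auto intro!: continuous_intros\<close>)
  then have "(g' x) integrable_on cbox 0 1" by (intro integrable_continuous) simp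
  then have "blinfun_apply (integral (cbox 0 1) (g' x)) = (\<lambda>h. integral {0..1} (\<lambda>s. frechet_derivative g (at (x, s)) (h, 0)))"
    using r by (auto simp: blinfun_apply_integral g'_apply cbox_interval intro!: ext integral_cong)
  ultimately show ?thesis by (simp add: cbox_interval)
qed

lemma pd_integral_param:
  fixes g :: "'c::euclidean_space \<times> real \<Rightarrow> real"
  assumes "open Q" "open V" "V \<times> {0..1} \<subseteq> Q" "smooth Q g" "x \<in> V"
  shows "pd i (\<lambda>z. integral {0..1} (\<lambda>s. g (z, s))) x = integral {0..1} (\<lambda>s. pd (i, 0) g (x, s))"
  using pd_has_derivative[OF has_derivative_integral_param[OF assms]] unfolding pd_def by simp

lemma smooth_integral_param:
  fixes g :: "'c::euclidean_space \<times> real \<Rightarrow> real"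
  assumes Q: "open Q" and V: "open V" and VQ: "V \<times> {0..1} \<subseteq> Q" and g: "smooth Q g"
  shows "smooth V (\<lambda>z. integral {0..1} (\<lambda>s. g (z, s)))"
proof -
  have "Ck k V (\<lambda>z. integral {0..1} (\<lambda>s. g (z, s)))" if "smooth Q g" for k g
    using that
  proof (induction k arbitrary: g)
    case 0
    have "(\<lambda>z. integral {0..1} (\<lambda>s. g (z, s))) differentiable_on V"
      unfolding differentiable_on_eq_differentiable_at[OF V] differentiable_def
      using has_derivative_integral_param[OF Q V VQ 0] by blast
    then show ?case by (simp add: differentiable_imp_continuous_on)
  next
    case (Suc k)
    have "(\<lambda>z. integral {0..1} (\<lambda>s. g (z, s))) differentiable_on V"
      unfolding differentiable_on_eq_differentiable_at[OF V] differentiable_def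
      using has_derivative_integral_param[OF Q V VQ Suc.prems] by blast
    moreover have "Ck k V (pd i (\<lambda>z. integral {0..1} (\<lambda>s. g (z, s))))" if "i \<in> Basis" for i
    proof (rule Ck_cong_open[OF V])
      have "(i, 0) \<in> (Basis :: ('c \<times> real) set)" using that by (simp add: Basis_prod_def)
      then show "Ck k V (\<lambda>z. integral {0..1} (\<lambda>s. pd (i, 0) g (z, s)))"
        using Suc.IH smooth_pd Suc.prems by blast
      show "\<And>y. y \<in> V \<Longrightarrow> integral {0..1} (\<lambda>s. pd (i, 0) g (y, s)) = pd i (\<lambda>z. integral {0..1} (\<lambda>s. g (z, s))) y"
        using pd_integral_param[OF Q V VQ Suc.prems] by simp
    qed
    ultimately show ?case by simp
  qed
  then show ?thesis using g unfolding smooth_def by blast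
qed

section \<open>Covariant derivative and curvature\<close>

lemma smooth_secD: "smooth_sec W \<eta> \<Longrightarrow> smooth W (\<lambda>x. \<eta> x $ \<alpha>)"
  by (simp add: smooth_sec_def)

lemma smooth_formD: "smooth_form W \<phi> \<Longrightarrow> a \<in> Basis \<Longrightarrow> smooth W (\<lambda>x. \<phi> x a $ \<alpha>)"
  by (simp add: smooth_form_def smooth_sec_def)

lemma smooth_sec_subset: "smooth_sec V \<eta> \<Longrightarrow> W \<subseteq> V \<Longrightarrow> smooth_sec W \<eta>"
  by (auto simp: smooth_sec_def intro: smooth_subset)

lemma smooth_form_subset: "smooth_form V \<phi> \<Longrightarrow> W \<subseteq> V \<Longrightarrow> smooth_form W \<phi>"
  by (auto simp: smooth_form_def intro: smooth_sec_subset)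

lemma smooth_connection_subset: "smooth_connection V \<Gamma> \<Longrightarrow> W \<subseteq> V \<Longrightarrow> smooth_connection W \<Gamma>"
  by (auto simp: smooth_connection_def intro: smooth_subset)

lemma smooth_sec_compose_linear:
  assumes "smooth_sec V \<psi>" "open W" "open V" "T ` W \<subseteq> V" "bounded_linear T"
  shows "smooth_sec W (\<lambda>w. \<psi> (T w))"
  unfolding smooth_sec_def
  using smooth_compose_linear[OF assms(2-5) smooth_secD[OF assms(1)]] by blast

lemma smooth_form_compose_linear:
  assumes "smooth_form V \<phi>" "open W" "open V" "T ` W \<subseteq> V" "bounded_linear T"
    and "\<And>b. b \<in> Basis \<Longrightarrow> T b \<in> Basis"
  shows "smooth_form W (\<lambda>w e. \<phi> (T w) (T e))"
  unfolding smooth_form_def smooth_sec_def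
  using smooth_compose_linear[OF assms(2-5) smooth_formD[OF assms(1) assms(6)]] by blast

lemma smooth_connection_imp_differentiable:
  "smooth_connection U \<Gamma> \<Longrightarrow> open U \<Longrightarrow> x \<in> U \<Longrightarrow> c \<in> Basis \<Longrightarrow>
   (\<lambda>x. \<Gamma> x c $ \<alpha> $ \<beta>) differentiable (at x)"
  unfolding smooth_connection_def using smooth_imp_differentiable by blast

lemma pdv_nth [simp]: "pdv i f x $ \<alpha> = pd i (\<lambda>y. f y $ \<alpha>) x"
  by (simp add: pdv_def)

lemma pdm_nth [simp]: "pdm i f x $ \<alpha> $ \<beta> = pd i (\<lambda>y. f y $ \<alpha> $ \<beta>) x"
  by (simp add: pdm_def)

lemma pdv_add:
  assumes "\<And>\<alpha>. (\<lambda>y. u y $ \<alpha>) differentiable (at x)" "\<And>\<alpha>. (\<lambda>y. v y $ \<alpha>) differentiable (at x)"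
  shows "pdv c (\<lambda>y. u y + v y) x = pdv c u x + pdv c v x"
  using assms by (simp add: vec_eq_iff pd_add)

lemma pdv_diff:
  assumes "\<And>\<alpha>. (\<lambda>y. u y $ \<alpha>) differentiable (at x)" "\<And>\<alpha>. (\<lambda>y. v y $ \<alpha>) differentiable (at x)"
  shows "pdv c (\<lambda>y. u y - v y) x = pdv c u x - pdv c v x"
  using assms by (simp add: vec_eq_iff pd_diff)

lemma pdv_matrix_vector_mult:
  assumes M: "\<And>\<alpha> \<beta>. (\<lambda>y. M y $ \<alpha> $ \<beta>) differentiable (at x)"
    and v: "\<And>\<beta>. (\<lambda>y. v y $ \<beta>) differentiable (at x)"
  shows "pdv c (\<lambda>y. M y *v v y) x = pdm c M x *v v x + M x *v pdv c v x"
proof -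
  have "pd c (\<lambda>y. \<Sum>\<beta>\<in>UNIV. M y $ \<alpha> $ \<beta> * v y $ \<beta>) x
          = (\<Sum>\<beta>\<in>UNIV. M x $ \<alpha> $ \<beta> * pd c (\<lambda>y. v y $ \<beta>) x + pd c (\<lambda>y. M y $ \<alpha> $ \<beta>) x * v x $ \<beta>)"
    for \<alpha>
    using M v by (simp add: pd_sum pd_mult differentiable_mult)
  then show ?thesis
    by (simp add: vec_eq_iff matrix_vector_mult_def sum.distrib add.commute)
qed

lemma Dconn_add:
  assumes "\<And>\<alpha>. (\<lambda>y. u y $ \<alpha>) differentiable (at x)" "\<And>\<alpha>. (\<lambda>y. v y $ \<alpha>) differentiable (at x)"
  shows "Dconn G (\<lambda>y. u y + v y) x a = Dconn G u x a + Dconn G v x a"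
  using pdv_add[OF assms] by (simp add: Dconn_def matrix_vector_right_distrib)

lemma Dwedge_diff:
  assumes "\<And>c \<alpha>. c \<in> {a, b} \<Longrightarrow> (\<lambda>y. \<phi> y c $ \<alpha>) differentiable (at x)"
    and "\<And>c \<alpha>. c \<in> {a, b} \<Longrightarrow> (\<lambda>y. \<theta> y c $ \<alpha>) differentiable (at x)"
  shows "Dwedge G (\<lambda>y c. \<phi> y c - \<theta> y c) x a b = Dwedge G \<phi> x a b - Dwedge G \<theta> x a b"
proof -
  have "pdv a (\<lambda>y. \<phi> y b - \<theta> y b) x = pdv a (\<lambda>y. \<phi> y b) x - pdv a (\<lambda>y. \<theta> y b) x"
       "pdv b (\<lambda>y. \<phi> y a - \<theta> y a) x = pdv b (\<lambda>y. \<phi> y a) x - pdv b (\<lambda>y. \<theta> y a) x"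
    by (rule pdv_diff; use assms in auto)+
  then show ?thesis
    unfolding Dwedge_def by (simp only:) (simp add: algebra_simps)
qed

lemma smooth_Dconn:
  assumes W: "open W" and c: "c \<in> Basis" and \<eta>: "smooth_sec W \<eta>"
    and G: "\<And>\<alpha> \<beta>. smooth W (\<lambda>z. G z c $ \<alpha> $ \<beta>)"
  shows "smooth W (\<lambda>z. Dconn G \<eta> z c $ \<alpha>)"
proof -
  have "smooth W (\<lambda>z. pd c (\<lambda>y. \<eta> y $ \<alpha>) z + (\<Sum>\<beta>\<in>UNIV. G z c $ \<alpha> $ \<beta> * \<eta> z $ \<beta>))"
    using \<eta> G c unfolding smooth_sec_def
    by (intro smooth_add[OF W] smooth_sum[OF W] smooth_mult[OF W] smooth_pd) auto
  then show ?thesis by (simp add: Dconn_def matrix_vector_mult_def)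
qed

text \<open>The second derivatives of \<open>\<psi>\<close> cancel by Schwarz's theorem, so \<open>\<kappa>\<close> is a tensor.\<close>
lemma kappa_eq_curv:
  assumes V: "open V" "x \<in> V" and \<psi>: "smooth_sec V \<psi>"
    and \<Gamma>: "\<And>c \<alpha> \<beta>. c \<in> Basis \<Longrightarrow> (\<lambda>y. \<Gamma> y c $ \<alpha> $ \<beta>) differentiable (at x)"
    and ab: "a \<in> Basis" "b \<in> Basis"
  shows "kappa \<Gamma> \<psi> x a b = curv \<Gamma> x a b *v \<psi> x"
proof -
  have \<psi>': "smooth V (\<lambda>y. \<psi> y $ \<alpha>)" for \<alpha> using \<psi> by (simp add: smooth_sec_def)
  have \<psi>_diff: "(\<lambda>y. \<psi> y $ \<alpha>) differentiable (at x)" for \<alpha>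
    using smooth_imp_differentiable[OF \<psi>' V] .
  have d\<psi>_diff: "(\<lambda>y. pdv c \<psi> y $ \<alpha>) differentiable (at x)" if "c \<in> Basis" for c \<alpha>
    using smooth_imp_differentiable[OF smooth_pd[OF \<psi>' that] V] by simp
  have d_Dconn: "pdv c (\<lambda>y. Dconn \<Gamma> \<psi> y d) x
      = pdv c (pdv d \<psi>) x + (pdm c (\<lambda>y. \<Gamma> y d) x *v \<psi> x + \<Gamma> x d *v pdv c \<psi> x)"
    if "c \<in> Basis" "d \<in> Basis" for c d
  proof -
    have "(\<lambda>y. (\<Gamma> y d *v \<psi> y) $ \<alpha>) differentiable (at x)" for \<alpha>
      using that \<Gamma> \<psi>_diff by (simp add: matrix_vector_mult_def differentiable_sum differentiable_mult)
    then show ?thesis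
      using that \<Gamma> \<psi>_diff d\<psi>_diff by (simp add: Dconn_def pdv_add pdv_matrix_vector_mult)
  qed
  have "pdv a (pdv b \<psi>) x = pdv b (pdv a \<psi>) x"
    using pd_commute[OF V \<psi>' ab] by (simp add: vec_eq_iff pdv_def)
  then show ?thesis
    unfolding kappa_def Dwedge_def d_Dconn[OF ab] d_Dconn[OF ab(2,1)]
    by (simp add: Dconn_def curv_def algebra_simps
        matrix_vector_mul_assoc[symmetric] scaleR_matrix_vector_assoc[symmetric])
qed

lemma Dwedge_gauge:
  assumes V: "open V" "z \<in> V" and \<phi>: "smooth_form V \<phi>" and \<psi>: "smooth_sec V \<psi>" and \<theta>: "smooth_sec V \<theta>"
    and G: "\<And>c \<alpha> \<beta>. c \<in> Basis \<Longrightarrow> smooth V (\<lambda>y. G y c $ \<alpha> $ \<beta>)"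
    and eq: "Dwedge G \<phi> z c d = kappa G \<psi> z c d" and c: "c \<in> Basis" and d: "d \<in> Basis"
  shows "Dwedge G (\<lambda>y e. \<phi> y e - Dconn G \<theta> y e) z c d = curv G z c d *v (\<psi> z - \<theta> z)"
proof -
  have G_diff: "(\<lambda>y. G y e $ \<alpha> $ \<beta>) differentiable (at z)" if "e \<in> Basis" for e \<alpha> \<beta>
    using smooth_imp_differentiable[OF G[OF that] V] .
  have "Dwedge G (\<lambda>y e. \<phi> y e - Dconn G \<theta> y e) z c d = Dwedge G \<phi> z c d - kappa G \<theta> z c d"
    unfolding kappa_def using c d
    by (intro Dwedge_diff) (auto intro!: smooth_imp_differentiable[OF _ V] smooth_formD[OF \<phi>]
        smooth_Dconn[OF V(1) _ \<theta> G])
  also have "\<dots> = curv G z c d *v \<psi> z - curv G z c d *v \<theta> z"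
    using eq kappa_eq_curv[OF V \<psi> G_diff c d] kappa_eq_curv[OF V \<theta> G_diff c d] by simp
  finally show ?thesis by (simp add: matrix_vector_mult_diff_distrib)
qed

lemma curv_antisym: "curv G x b a = - curv G x a b"
  by (simp add: curv_def algebra_simps)

definition curv_kernel :: "('a::euclidean_space \<Rightarrow> 'a \<Rightarrow> real^'k^'k) \<Rightarrow> 'a \<Rightarrow> (real^'k) set" where
  "curv_kernel \<Gamma> x = {v. \<forall>a\<in>Basis. \<forall>b\<in>Basis. curv \<Gamma> x a b *v v = 0}"

lemma curv_rank_curv_kernel: "curv_rank \<Gamma> x = CARD('k) - dim (curv_kernel \<Gamma> x)"
  for \<Gamma> :: "'a::euclidean_space \<Rightarrow> 'a \<Rightarrow> real^'k^'k"
  by (simp add: curv_rank_def curv_kernel_def)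

lemma subspace_curv_kernel: "subspace (curv_kernel \<Gamma> x)"
  by (auto simp: subspace_def curv_kernel_def matrix_vector_right_distrib matrix_vector_mult_scaleR)

lemma dim_curv_kernel_eq:
  fixes \<Gamma> :: "'a::euclidean_space \<Rightarrow> 'a \<Rightarrow> real^'k^'k"
  assumes "curv_rank \<Gamma> x = curv_rank \<Gamma> y"
  shows "dim (curv_kernel \<Gamma> x) = dim (curv_kernel \<Gamma> y)"
  using assms dim_subset_UNIV_cart[of "curv_kernel \<Gamma> x"] dim_subset_UNIV_cart[of "curv_kernel \<Gamma> y"]
  by (simp add: curv_rank_curv_kernel)

lemma exact_connectionI:
  assumes "smooth_connection U \<Gamma>"
    and "\<And>x y. x \<in> U \<Longrightarrow> y \<in> U \<Longrightarrow> curv_rank \<Gamma> x = curv_rank \<Gamma> y"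
    and "\<And>V \<phi> \<psi> z. open V \<Longrightarrow> V \<subseteq> U \<Longrightarrow> smooth_form V \<phi> \<Longrightarrow> smooth_sec V \<psi> \<Longrightarrow>
           (\<And>x a b. x \<in> V \<Longrightarrow> a \<in> Basis \<Longrightarrow> b \<in> Basis \<Longrightarrow> Dwedge \<Gamma> \<phi> x a b = kappa \<Gamma> \<psi> x a b) \<Longrightarrow>
           z \<in> V \<Longrightarrow> \<exists>W \<eta>. open W \<and> z \<in> W \<and> W \<subseteq> V \<and> smooth_sec W \<eta> \<and>
                          (\<forall>y\<in>W. \<forall>a\<in>Basis. \<phi> y a = Dconn \<Gamma> \<eta> y a)"
  shows "exact_connection U \<Gamma>"
  unfolding exact_connection_def
proof (intro conjI ballI allI impI)
  fix V \<phi> \<psi> z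
  assume "open V \<and> V \<subseteq> U \<and> smooth_form V \<phi> \<and> smooth_sec V \<psi> \<and>
    (\<forall>x\<in>V. \<forall>a\<in>Basis. \<forall>b\<in>Basis. Dwedge \<Gamma> \<phi> x a b = kappa \<Gamma> \<psi> x a b)" "z \<in> V"
  then have "\<exists>W \<eta>. open W \<and> z \<in> W \<and> W \<subseteq> V \<and> smooth_sec W \<eta> \<and> (\<forall>y\<in>W. \<forall>a\<in>Basis. \<phi> y a = Dconn \<Gamma> \<eta> y a)"
    by (intro assms(3)) auto
  then show "\<exists>W. open W \<and> z \<in> W \<and> W \<subseteq> V \<and> (\<exists>\<eta>. smooth_sec W \<eta> \<and> (\<forall>y\<in>W. \<forall>a\<in>Basis. \<phi> y a = Dconn \<Gamma> \<eta> y a))"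
    by blast
qed (fact assms(1), fact assms(2))

lemma exact_connectionD:
  assumes "exact_connection U \<Gamma>"
  shows "smooth_connection U \<Gamma>" "x \<in> U \<Longrightarrow> y \<in> U \<Longrightarrow> curv_rank \<Gamma> x = curv_rank \<Gamma> y"
  using assms unfolding exact_connection_def by blast+

lemma exact_connectionE:
  assumes "exact_connection U \<Gamma>" "open V" "V \<subseteq> U" "smooth_form V \<phi>" "smooth_sec V \<psi>"
    and "\<And>x a b. x \<in> V \<Longrightarrow> a \<in> Basis \<Longrightarrow> b \<in> Basis \<Longrightarrow> Dwedge \<Gamma> \<phi> x a b = kappa \<Gamma> \<psi> x a b"
    and "z \<in> V"
  obtains W \<eta> where "open W" "z \<in> W" "W \<subseteq> V" "smooth_sec W \<eta>"
    "\<And>y a. y \<in> W \<Longrightarrow> a \<in> Basis \<Longrightarrow> \<phi> y a = Dconn \<Gamma> \<eta> y a"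
proof -
  note primitive = assms(1)[unfolded exact_connection_def, THEN conjunct2, THEN conjunct2, rule_format]
  have "\<exists>W. open W \<and> z \<in> W \<and> W \<subseteq> V \<and> (\<exists>\<eta>. smooth_sec W \<eta> \<and> (\<forall>y\<in>W. \<forall>a\<in>Basis. \<phi> y a = Dconn \<Gamma> \<eta> y a))"
    by (rule primitive) (use assms(2-5,7) in \<open>auto intro: assms(6)\<close>)
  then show ?thesis using that by blast
qed

section \<open>Product coordinates\<close>

lemma prod_Basis_cases:
  fixes c :: "'a::euclidean_space \<times> 'b::euclidean_space"
  assumes "c \<in> Basis"
  obtains a where "a \<in> Basis" "c = (a, 0)" | v where "v \<in> Basis" "c = (0, v)"
  using assms by (auto simp: Basis_prod_def)

lemma horizontal_in_Basis: "a \<in> Basis \<Longrightarrow> ((a, 0) :: 'a::euclidean_space \<times> 'b::euclidean_space) \<in> Basis"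
  by (simp add: Basis_prod_def)

lemma vertical_in_Basis: "v \<in> Basis \<Longrightarrow> ((0, v) :: 'a::euclidean_space \<times> 'b::euclidean_space) \<in> Basis"
  by (simp add: Basis_prod_def)

lemma pd_compose_fst:
  "f differentiable (at (fst z)) \<Longrightarrow> pd c (\<lambda>z. f (fst z)) z = pd (fst c) f (fst z)"
  using pd_compose_linear[OF bounded_linear_fst] .

lemma pd_slice_fst:
  assumes "f differentiable (at (x, y))"
  shows "pd a (\<lambda>x. f (x, y)) x = pd (a, 0) f (x, y)"
proof -
  have "((\<lambda>x. (x, y)) has_derivative (\<lambda>h. (h, 0))) (at x)"
    by (auto intro!: derivative_eq_intros)
  from pd_compose[OF _ this, of f] assms show ?thesis unfolding pd_def by simp
qed

lemma pd_slice_snd: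
  assumes "f differentiable (at (x, y))"
  shows "pd v (\<lambda>y. f (x, y)) y = pd (0, v) f (x, y)"
proof -
  have "((\<lambda>y. (x, y)) has_derivative (\<lambda>h. (0, h))) (at y)"
    by (auto intro!: derivative_eq_intros)
  from pd_compose[OF _ this, of f] assms show ?thesis unfolding pd_def by simp
qed

lemma pd_vertical_eq_sum:
  assumes "f differentiable (at (x, y))"
  shows "pd (0, u) f (x, y) = (\<Sum>v\<in>Basis. (u \<bullet> v) * pd (0, v) f (x, y))"
proof -
  have "((\<lambda>y. (x, y)) has_derivative (\<lambda>h. (0, h))) (at y)"
    by (auto intro!: derivative_eq_intros)
  then have "(\<lambda>y. (x, y)) differentiable (at y)"
    unfolding differentiable_def by blast
  from differentiable_chain_at[of "\<lambda>y. (x, y)" y f, OF this] assms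
  have "(\<lambda>y. f (x, y)) differentiable (at y)" by (simp add: o_def)
  from pd_eq_sum_Basis[OF this, of u] show ?thesis
    unfolding pd_slice_snd[OF assms] .
qed

lemma smooth_slice:
  fixes f :: "'a::euclidean_space \<times> 'b::euclidean_space \<Rightarrow> real"
  assumes "smooth W f" "open W" "open B" "(\<lambda>x. (x, y)) ` B \<subseteq> W"
  shows "smooth B (\<lambda>x. f (x, y))"
proof (rule smooth_compose[OF assms(3,2,4), of "\<lambda>z h. (h, 0)"])
  show "((\<lambda>x. (x, y)) has_derivative (\<lambda>h. (h, 0))) (at z)" for z
    by (auto intro!: derivative_eq_intros)
qed (auto intro: smooth_const assms(1))

lemma constant_on_fibres:
  fixes f :: "'a::euclidean_space \<times> 'b::euclidean_space \<Rightarrow> real"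
  assumes W: "open (A \<times> ball y0 r)" and f: "smooth (A \<times> ball y0 r) f"
    and vertical: "\<And>z w. z \<in> A \<times> ball y0 r \<Longrightarrow> w \<in> Basis \<Longrightarrow> pd (0, w) f z = 0"
    and xy: "(x, y) \<in> A \<times> ball y0 r"
  shows "f (x, y) = f (x, y0)"
proof -
  have "\<exists>c. \<forall>y \<in> ball y0 r. f (x, y) = c"
  proof (rule has_derivative_zero_constant[OF convex_ball])
    fix y' assume "y' \<in> ball y0 r"
    then have xy': "(x, y') \<in> A \<times> ball y0 r" using xy by simp
    then have f_diff: "f differentiable (at (x, y'))" using smooth_imp_differentiable[OF f W] by blast
    have "((\<lambda>y. (x, y)) has_derivative (\<lambda>h. (0, h))) (at y')"
      by (auto intro!: derivative_eq_intros)
    from has_derivative_compose[OF this f_diff[unfolded frechet_derivative_works]]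
    have "((\<lambda>y. f (x, y)) has_derivative (\<lambda>h. pd (0, h) f (x, y'))) (at y')"
      by (simp add: pd_def)
    moreover have "pd (0, h) f (x, y') = 0" for h
      using pd_vertical_eq_sum[OF f_diff, of h] vertical[OF xy'] by simp
    ultimately show "((\<lambda>y. f (x, y)) has_derivative (\<lambda>h. 0)) (at y' within ball y0 r)"
      by (simp add: has_derivative_at_withinI)
  qed
  moreover have "y0 \<in> ball y0 r" using xy by (auto intro: le_less_trans[OF zero_le_dist])
  ultimately show ?thesis using xy by force
qed

section \<open>The Poincare lemma along the fibres\<close>

lemma radial_in_Times_ball:
  fixes y0 :: "'b::real_normed_vector"
  assumes "(x, y) \<in> A \<times> ball y0 r" "s \<in> {0..1}"
  shows "(x, y0 + s *\<^sub>R (y - y0)) \<in> A \<times> ball y0 r"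
proof -
  have "dist y0 (y0 + s *\<^sub>R (y - y0)) = s * norm (y - y0)"
    using assms(2) by (simp add: dist_norm)
  also have "\<dots> \<le> norm (y - y0)" using assms(2) by (simp add: mult_left_le_one_le)
  also have "\<dots> < r" using assms(1) by (simp add: dist_norm norm_minus_commute)
  finally show ?thesis using assms(1) by simp
qed

lemma has_integral_radial:
  assumes W: "open W" and f: "smooth W f" and segment: "\<And>s. s \<in> {0..1} \<Longrightarrow> (x, y0 + s *\<^sub>R (y - y0)) \<in> W"
  shows "((\<lambda>s. f (x, y0 + s *\<^sub>R (y - y0)) + s * pd (0, y - y0) f (x, y0 + s *\<^sub>R (y - y0)))
           has_integral f (x, y)) {0..1}"
proof -
  have line: "(x, y0 + s *\<^sub>R (y - y0)) = (x, y0) + s *\<^sub>R (0, y - y0)" for s by simp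
  have "((\<lambda>s. s * f (x, y0 + s *\<^sub>R (y - y0))) has_vector_derivative
          f (x, y0 + s *\<^sub>R (y - y0)) + s * pd (0, y - y0) f (x, y0 + s *\<^sub>R (y - y0))) (at s within {0..1})"
    if "s \<in> {0..1}" for s
  proof -
    have "f differentiable (at ((x, y0) + s *\<^sub>R (0, y - y0)))"
      using smooth_imp_differentiable[OF f W segment[OF that]] by simp
    from DERIV_mult[OF DERIV_ident has_real_derivative_pd_line[OF this]]
    show ?thesis unfolding line has_real_derivative_iff_has_vector_derivative
      by (auto intro: has_vector_derivative_at_within simp: mult.commute)
  qed
  from fundamental_theorem_of_calculus[OF _ this] show ?thesis by simp
qed

text \<open>Closedness of the fibre form turns the derivative of the radial integrand into a total
  derivative in the radial parameter \<open>s\<close>.\<close>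
lemma pd_compose_radial:
  fixes f :: "'a::euclidean_space \<times> 'b::euclidean_space \<Rightarrow> real"
  assumes f: "f differentiable (at (fst z, y0 + s *\<^sub>R (snd z - y0)))"
  shows "(\<lambda>q. f (fst (fst q), y0 + snd q *\<^sub>R (snd (fst q) - y0))) differentiable (at (z, s))"
    and "pd ((0, w), 0) (\<lambda>q. f (fst (fst q), y0 + snd q *\<^sub>R (snd (fst q) - y0))) (z, s)
         = s * pd (0, w) f (fst z, y0 + s *\<^sub>R (snd z - y0))"
proof -
  define m where "m q = (fst (fst q), y0 + snd q *\<^sub>R (snd (fst q) - y0))" for q :: "('a \<times> 'b) \<times> real"
  have f': "f differentiable (at (m (z, s)))" using f by (simp add: m_def)
  have m': "(m has_derivative (\<lambda>h. (fst (fst h), snd h *\<^sub>R (snd z - y0) + s *\<^sub>R snd (fst h)))) (at (z, s))"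
    unfolding m_def by (auto intro!: derivative_eq_intros simp: algebra_simps)
  have "(\<lambda>q. f (m q)) differentiable (at (z, s))"
    using differentiable_chain_at[of m "(z, s)" f] f' m' by (auto simp: o_def differentiable_def)
  then show "(\<lambda>q. f (fst (fst q), y0 + snd q *\<^sub>R (snd (fst q) - y0))) differentiable (at (z, s))"
    by (simp add: m_def)
  have lin: "linear (frechet_derivative f (at (m (z, s))))"
    using f' frechet_derivative_works has_derivative_linear by blast
  have "pd ((0, w), 0) (\<lambda>q. f (m q)) (z, s) = frechet_derivative f (at (m (z, s))) (s *\<^sub>R (0, w))"
    using pd_compose[OF f' m'] by simp
  also have "\<dots> = s * pd (0, w) f (m (z, s))"
    unfolding pd_def linear_cmul[OF lin] by simp
  finally show "pd ((0, w), 0) (\<lambda>q. f (fst (fst q), y0 + snd q *\<^sub>R (snd (fst q) - y0))) (z, s)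
                = s * pd (0, w) f (fst z, y0 + s *\<^sub>R (snd z - y0))"
    by (simp add: m_def)
qed

lemma pd_radial_integrand:
  fixes F :: "'b::euclidean_space \<Rightarrow> 'a::euclidean_space \<times> 'b \<Rightarrow> real"
  assumes W: "open W" and F: "\<And>v. v \<in> Basis \<Longrightarrow> smooth W (F v)"
    and p: "p = (fst z, y0 + s *\<^sub>R (snd z - y0))" "p \<in> W"
    and closed: "\<And>v w. v \<in> Basis \<Longrightarrow> w \<in> Basis \<Longrightarrow> pd (0, v) (F w) p = pd (0, w) (F v) p"
    and w: "w \<in> Basis"
  shows "pd ((0, w), 0)
           (\<lambda>q. \<Sum>v\<in>Basis. F v (fst (fst q), y0 + snd q *\<^sub>R (snd (fst q) - y0)) * ((snd (fst q) - y0) \<bullet> v))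
           (z, s)
         = F w p + s * pd (0, snd z - y0) (F w) p"
proof -
  define m where "m q = (fst (fst q), y0 + snd q *\<^sub>R (snd (fst q) - y0))" for q :: "('a \<times> 'b) \<times> real"
  have F_diff: "F v differentiable (at (fst z, y0 + s *\<^sub>R (snd z - y0)))" if "v \<in> Basis" for v
    using smooth_imp_differentiable[OF F[OF that] W] p by simp
  have radial: "(\<lambda>q. F v (m q)) differentiable (at (z, s))"
    "pd ((0, w), 0) (\<lambda>q. F v (m q)) (z, s) = s * pd (0, w) (F v) p" if "v \<in> Basis" for v
    using pd_compose_radial[OF F_diff[OF that]] p unfolding m_def by simp_all
  have affine: "((\<lambda>q. (snd (fst q) - y0) \<bullet> v) has_derivative (\<lambda>h. snd (fst h) \<bullet> v)) (at (z, s))" for v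
    by (auto intro!: derivative_eq_intros simp: inner_diff_left)
  have affine_diff: "(\<lambda>q. (snd (fst q) - y0) \<bullet> v) differentiable (at (z, s))" for v
    using affine unfolding differentiable_def by blast
  have "pd ((0, w), 0) (\<lambda>q. \<Sum>v\<in>Basis. F v (m q) * ((snd (fst q) - y0) \<bullet> v)) (z, s)
        = (\<Sum>v\<in>Basis. F v p * (w \<bullet> v) + s * ((snd z - y0) \<bullet> v) * pd (0, v) (F w) p)"
  proof -
    have "pd ((0, w), 0) (\<lambda>q. F v (m q) * ((snd (fst q) - y0) \<bullet> v)) (z, s)
          = F v p * (w \<bullet> v) + s * ((snd z - y0) \<bullet> v) * pd (0, v) (F w) p" if v: "v \<in> Basis" for v
      using pd_mult[OF radial(1)[OF v] affine_diff] radial(2)[OF v] pd_has_derivative[OF affine]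
        closed[OF w v] p by (simp add: m_def mult_ac)
    then show ?thesis
      using radial(1) affine_diff by (simp add: pd_sum differentiable_mult)
  qed
  also have "\<dots> = F w p + s * pd (0, snd z - y0) (F w) p"
  proof -
    have "(\<Sum>v\<in>Basis. F v p * (w \<bullet> v)) = (\<Sum>v\<in>Basis. if v = w then F v p else 0)"
      by (rule sum.cong) (auto simp: inner_Basis w)
    moreover have "F w differentiable (at (fst p, snd p))" using F_diff[OF w] p by simp
    from pd_vertical_eq_sum[OF this, of "snd z - y0"]
    have "(\<Sum>v\<in>Basis. s * ((snd z - y0) \<bullet> v) * pd (0, v) (F w) p) = s * pd (0, snd z - y0) (F w) p"
      by (simp add: sum_distrib_left mult_ac)
    ultimately show ?thesis using w by (simp add: sum.distrib)
  qed
  finally show ?thesis unfolding m_def by simp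
qed

lemma smooth_radial_integrand:
  fixes F :: "'b::euclidean_space \<Rightarrow> 'a::euclidean_space \<times> 'b \<Rightarrow> real"
  assumes A: "open A" and F: "\<And>v. v \<in> Basis \<Longrightarrow> smooth (A \<times> ball y0 r) (F v)"
  obtains Q where "open Q" "(A \<times> ball y0 r) \<times> {0..1} \<subseteq> Q"
    "smooth Q (\<lambda>q. \<Sum>v\<in>Basis. F v (fst (fst q), y0 + snd q *\<^sub>R (snd (fst q) - y0)) * ((snd (fst q) - y0) \<bullet> v))"
proof
  let ?W = "A \<times> ball y0 r"
  define m where "m q = (fst (fst q), y0 + snd q *\<^sub>R (snd (fst q) - y0))" for q :: "('a \<times> 'b) \<times> real"
  define m' where "m' q h = (fst (fst h), snd h *\<^sub>R (snd (fst q) - y0) + snd q *\<^sub>R snd (fst h))"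
    for q h :: "('a \<times> 'b) \<times> real"
  define Q where "Q = m -` ?W"
  show Q: "open Q"
    unfolding Q_def m_def using A
    by (intro continuous_open_vimage open_Times open_ball) (auto intro!: continuous_intros)
  show "?W \<times> {0..1} \<subseteq> Q"
  proof (clarify)
    fix x y and s :: real assume "x \<in> A" "y \<in> ball y0 r" "s \<in> {0..1}"
    then show "((x, y), s) \<in> Q"
      using radial_in_Times_ball[of x y A y0 r s] by (simp add: Q_def m_def)
  qed
  have m_deriv: "(m has_derivative m' q) (at q)" for q
    unfolding m_def m'_def by (auto intro!: derivative_eq_intros simp: algebra_simps)
  have linear_smooth: "smooth Q (\<lambda>q. snd (fst q) \<bullet> j)" "smooth Q (\<lambda>q. snd q)" for j :: 'b
    by (intro smooth_bounded_linear bounded_linear_inner_left_comp bounded_linear_snd_comp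
        bounded_linear_fst_comp bounded_linear_ident bounded_linear_snd)+
  have "smooth Q (\<lambda>q. m' q i \<bullet> j)" for i j
  proof -
    have "(\<lambda>q. m' q i \<bullet> j) = (\<lambda>q. fst (fst i) \<bullet> fst j
            + (snd i * (snd (fst q) \<bullet> snd j - y0 \<bullet> snd j) + snd q * (snd (fst i) \<bullet> snd j)))"
      by (auto simp: m'_def inner_prod_def inner_add_left inner_diff_left algebra_simps)
    then show ?thesis
      by (simp only:) (intro smooth_add[OF Q] smooth_mult[OF Q] smooth_diff[OF Q] smooth_const linear_smooth)
  qed
  then have Fm: "smooth Q (\<lambda>q. F v (m q))" if "v \<in> Basis" for v
    using smooth_compose[OF Q open_Times[OF A open_ball] _ m_deriv _ F[OF that]] by (auto simp: Q_def)
  have "smooth Q (\<lambda>q. (snd (fst q) - y0) \<bullet> v)" for v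
    using smooth_diff[OF Q linear_smooth(1) smooth_const, of v "y0 \<bullet> v"] by (simp add: inner_diff_left)
  then show "smooth Q (\<lambda>q. \<Sum>v\<in>Basis. F v (fst (fst q), y0 + snd q *\<^sub>R (snd (fst q) - y0)) * ((snd (fst q) - y0) \<bullet> v))"
    using Fm unfolding m_def by (intro smooth_sum[OF Q] smooth_mult[OF Q]) auto
qed

lemma vertical_primitive:
  fixes F :: "'b::euclidean_space \<Rightarrow> 'a::euclidean_space \<times> 'b \<Rightarrow> real"
  assumes A: "open A" and F: "\<And>v. v \<in> Basis \<Longrightarrow> smooth (A \<times> ball y0 r) (F v)"
    and closed: "\<And>z v w. z \<in> A \<times> ball y0 r \<Longrightarrow> v \<in> Basis \<Longrightarrow> w \<in> Basis \<Longrightarrow>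
                   pd (0, v) (F w) z = pd (0, w) (F v) z"
  defines "H \<equiv> \<lambda>z. integral {0..1} (\<lambda>s. \<Sum>v\<in>Basis. F v (fst z, y0 + s *\<^sub>R (snd z - y0)) * ((snd z - y0) \<bullet> v))"
  shows "smooth (A \<times> ball y0 r) H"
    and "\<And>z w. z \<in> A \<times> ball y0 r \<Longrightarrow> w \<in> Basis \<Longrightarrow> pd (0, w) H z = F w z"
proof -
  let ?W = "A \<times> ball y0 r"
  let ?g = "\<lambda>q. \<Sum>v\<in>Basis. F v (fst (fst q), y0 + snd q *\<^sub>R (snd (fst q) - y0)) * ((snd (fst q) - y0) \<bullet> v)"
  have W: "open ?W" using A by (simp add: open_Times)
  obtain Q where Q: "open Q" "?W \<times> {0..1} \<subseteq> Q" and g: "smooth Q ?g"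
    by (rule smooth_radial_integrand[OF A F])
  have H_eq: "H = (\<lambda>z. integral {0..1} (\<lambda>s. ?g (z, s)))"
    by (simp add: H_def)
  show "smooth ?W H"
    unfolding H_eq by (rule smooth_integral_param[OF Q(1) W Q(2) g])
  fix z and w :: 'b assume z: "z \<in> ?W" and w: "w \<in> Basis"
  let ?m = "\<lambda>s. (fst z, y0 + s *\<^sub>R (snd z - y0))"
  have "pd (0, w) H z = integral {0..1} (\<lambda>s. pd ((0, w), 0) ?g (z, s))"
    unfolding H_eq by (rule pd_integral_param[OF Q(1) W Q(2) g z])
  also have "\<dots> = integral {0..1} (\<lambda>s. F w (?m s) + s * pd (0, snd z - y0) (F w) (?m s))"
  proof (rule integral_cong)
    fix s :: real assume "s \<in> {0..1}"
    then have ms: "?m s \<in> ?W" using radial_in_Times_ball[of "fst z" "snd z"] z by simp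
    show "pd ((0, w), 0) ?g (z, s) = F w (?m s) + s * pd (0, snd z - y0) (F w) (?m s)"
      by (rule pd_radial_integrand[OF W F refl ms closed[OF ms] w])
  qed
  also have "\<dots> = F w z"
  proof -
    have "?m s \<in> ?W" if "s \<in> {0..1}" for s
      using radial_in_Times_ball[of "fst z" "snd z" A y0 r s] z that by simp
    from has_integral_radial[OF W F[OF w] this] show ?thesis by (simp add: integral_unique)
  qed
  finally show "pd (0, w) H z = F w z" .
qed

section \<open>Pull-back along the first projection\<close>

lemma pull_fst_horizontal [simp]: "a \<in> Basis \<Longrightarrow> pull_fst \<Gamma> z (a, 0) = \<Gamma> (fst z) a"
  by (simp add: pull_fst_def)

lemma pull_fst_vertical [simp]: "pull_fst \<Gamma> z (0, v) = 0"
  using nonzero_Basis by (auto simp: pull_fst_def)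

lemma smooth_connection_pull_fst:
  fixes \<Gamma> :: "'a::euclidean_space \<Rightarrow> 'a \<Rightarrow> real^'k^'k"
  assumes "open U" "open W" "fst ` W \<subseteq> U" "smooth_connection U \<Gamma>"
  shows "smooth_connection W (pull_fst \<Gamma> :: 'a \<times> 'b::euclidean_space \<Rightarrow> _)"
  unfolding smooth_connection_def
proof (intro ballI allI)
  fix c :: "'a \<times> 'b" and \<alpha> \<beta> assume "c \<in> Basis"
  then show "smooth W (\<lambda>z. pull_fst \<Gamma> z c $ \<alpha> $ \<beta>)"
  proof (cases rule: prod_Basis_cases)
    case (1 a)
    then have "smooth U (\<lambda>x. \<Gamma> x a $ \<alpha> $ \<beta>)"
      using assms(4) by (simp add: smooth_connection_def)
    from smooth_compose_linear[OF assms(2,1,3) bounded_linear_fst this]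
    show ?thesis using 1 by simp
  qed (simp add: smooth_const)
qed

lemma differentiable_pull_fst:
  assumes \<Gamma>_diff: "\<And>c \<alpha> \<beta>. c \<in> Basis \<Longrightarrow> (\<lambda>x. \<Gamma> x c $ \<alpha> $ \<beta>) differentiable (at (fst z))"
    and "c \<in> Basis"
  shows "(\<lambda>y. pull_fst \<Gamma> y c $ \<alpha> $ \<beta>) differentiable (at z)"
  using assms(2)
proof (cases rule: prod_Basis_cases)
  case (1 a)
  from differentiable_chain_at[OF bounded_linear_imp_differentiable[OF bounded_linear_fst] \<Gamma>_diff[OF \<open>a \<in> Basis\<close>]]
  show ?thesis using 1 by (simp add: o_def)
qed simp

context
  fixes \<Gamma> :: "'a::euclidean_space \<Rightarrow> 'a \<Rightarrow> real^'k^'k" and z :: "'a \<times> 'b::euclidean_space"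
  assumes \<Gamma>_diff: "\<And>c \<alpha> \<beta>. c \<in> Basis \<Longrightarrow> (\<lambda>x. \<Gamma> x c $ \<alpha> $ \<beta>) differentiable (at (fst z))"
begin

lemma pdm_compose_fst:
  "b \<in> Basis \<Longrightarrow> pdm c (\<lambda>y. \<Gamma> (fst y) b) z = pdm (fst c) (\<lambda>x. \<Gamma> x b) (fst z)"
  using pd_compose_fst[OF \<Gamma>_diff] by (simp add: vec_eq_iff)

lemma curv_pull_fst_horizontal:
  "a \<in> Basis \<Longrightarrow> b \<in> Basis \<Longrightarrow> curv (pull_fst \<Gamma>) z (a, 0) (b, 0) = curv \<Gamma> (fst z) a b"
  by (simp add: curv_def pdm_compose_fst)

lemma curv_pull_fst_vertical:
  assumes "d \<in> Basis"
  shows "curv (pull_fst \<Gamma>) z (0, v) d = 0" "curv (pull_fst \<Gamma>) z d (0, v) = 0"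
proof -
  have "pdm (0, v) (\<lambda>y. pull_fst \<Gamma> y d) z = 0"
    using assms
  proof (cases rule: prod_Basis_cases)
    case (1 b)
    then show ?thesis using pd_zero[OF \<Gamma>_diff] by (simp add: pdm_compose_fst vec_eq_iff)
  qed (simp add: vec_eq_iff pd_const)
  moreover have "pdm d (\<lambda>y. pull_fst \<Gamma> y (0, v)) z = 0"
    by (simp add: vec_eq_iff pd_const)
  ultimately show "curv (pull_fst \<Gamma>) z (0, v) d = 0"
    by (simp add: curv_def)
  then show "curv (pull_fst \<Gamma>) z d (0, v) = 0"
    by (simp add: curv_antisym[of _ _ d])
qed

lemma curv_kernel_pull_fst: "curv_kernel (pull_fst \<Gamma>) z = curv_kernel \<Gamma> (fst z)"
proof -
  have "(\<forall>c\<in>Basis. \<forall>d\<in>Basis. curv (pull_fst \<Gamma>) z c d *v v = 0) \<longleftrightarrow>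
        (\<forall>a\<in>Basis. \<forall>b\<in>Basis. curv \<Gamma> (fst z) a b *v v = 0)" for v
  proof
    assume "\<forall>c\<in>Basis. \<forall>d\<in>Basis. curv (pull_fst \<Gamma>) z c d *v v = 0"
    then show "\<forall>a\<in>Basis. \<forall>b\<in>Basis. curv \<Gamma> (fst z) a b *v v = 0"
      using horizontal_in_Basis curv_pull_fst_horizontal by metis
  next
    assume H: "\<forall>a\<in>Basis. \<forall>b\<in>Basis. curv \<Gamma> (fst z) a b *v v = 0"
    show "\<forall>c\<in>Basis. \<forall>d\<in>Basis. curv (pull_fst \<Gamma>) z c d *v v = 0"
    proof (intro ballI)
      fix c d :: "'a \<times> 'b" assume c: "c \<in> Basis" and d: "d \<in> Basis"
      from c show "curv (pull_fst \<Gamma>) z c d *v v = 0"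
      proof (cases rule: prod_Basis_cases)
        case (1 a)
        from d show ?thesis
        proof (cases rule: prod_Basis_cases)
          case (1 b)
          then show ?thesis using H \<open>a \<in> Basis\<close> \<open>c = (a, 0)\<close> curv_pull_fst_horizontal by simp
        qed (use c curv_pull_fst_vertical in simp)
      qed (use d curv_pull_fst_vertical in simp)
    qed
  qed
  then show ?thesis by (simp add: curv_kernel_def)
qed

end

lemma kappa_pull_fst:
  assumes "open V" "z \<in> V" "smooth_sec V \<psi>"
    and \<Gamma>_diff: "\<And>c \<alpha> \<beta>. c \<in> Basis \<Longrightarrow> (\<lambda>x. \<Gamma> x c $ \<alpha> $ \<beta>) differentiable (at (fst z))"
    and "c \<in> Basis" "d \<in> Basis"
  shows "kappa (pull_fst \<Gamma>) \<psi> z c d = curv (pull_fst \<Gamma>) z c d *v \<psi> z"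
  using kappa_eq_curv[OF assms(1-3) differentiable_pull_fst[OF \<Gamma>_diff] assms(5,6)] .

lemma Dconn_pull_fst_compose_fst:
  assumes "\<And>\<alpha>. (\<lambda>x. \<eta> x $ \<alpha>) differentiable (at (fst z))"
  shows "a \<in> Basis \<Longrightarrow> Dconn (pull_fst \<Gamma>) (\<lambda>z. \<eta> (fst z)) z (a, 0) = Dconn \<Gamma> \<eta> (fst z) a"
    and "Dconn (pull_fst \<Gamma>) (\<lambda>z. \<eta> (fst z)) z (0, w) = 0"
  using pd_compose_fst[OF assms] pd_zero[OF assms] by (simp_all add: Dconn_def vec_eq_iff)

lemma pull_fst_vertical_closed:
  assumes V: "open V" "z \<in> V" and \<psi>: "smooth_sec V \<psi>"
    and \<Gamma>_diff: "\<And>c \<alpha> \<beta>. c \<in> Basis \<Longrightarrow> (\<lambda>x. \<Gamma> x c $ \<alpha> $ \<beta>) differentiable (at (fst z))"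
    and eq: "Dwedge (pull_fst \<Gamma>) \<phi> z (0, v) (0, w) = kappa (pull_fst \<Gamma>) \<psi> z (0, v) (0, w)"
    and v: "v \<in> Basis" and w: "w \<in> Basis"
  shows "pd (0, v) (\<lambda>y. \<phi> y (0, w) $ \<alpha>) z = pd (0, w) (\<lambda>y. \<phi> y (0, v) $ \<alpha>) z"
proof -
  have "Dwedge (pull_fst \<Gamma>) \<phi> z (0, v) (0, w) = 0"
    using eq kappa_pull_fst[OF V \<psi> \<Gamma>_diff vertical_in_Basis[OF v] vertical_in_Basis[OF w]]
      curv_pull_fst_vertical[OF \<Gamma>_diff vertical_in_Basis[OF w]] by simp
  then show ?thesis by (simp add: Dwedge_def vec_eq_iff)
qed

lemma pull_fst_vertical_gauge:
  fixes \<Gamma> :: "'a::euclidean_space \<Rightarrow> 'a \<Rightarrow> real^'k^'k"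
    and \<phi> :: "'a \<times> 'b::euclidean_space \<Rightarrow> 'a \<times> 'b \<Rightarrow> real^'k"
  assumes A: "open A" and \<phi>: "smooth_form (A \<times> ball y0 r) \<phi>" and \<psi>: "smooth_sec (A \<times> ball y0 r) \<psi>"
    and \<Gamma>: "smooth_connection A \<Gamma>"
    and eq: "\<And>z c d. z \<in> A \<times> ball y0 r \<Longrightarrow> c \<in> Basis \<Longrightarrow> d \<in> Basis \<Longrightarrow>
               Dwedge (pull_fst \<Gamma>) \<phi> z c d = kappa (pull_fst \<Gamma>) \<psi> z c d"
  obtains \<theta> where "smooth_sec (A \<times> ball y0 r) \<theta>"
    "\<And>z w. z \<in> A \<times> ball y0 r \<Longrightarrow> w \<in> Basis \<Longrightarrow> Dconn (pull_fst \<Gamma>) \<theta> z (0, w) = \<phi> z (0, w)"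
proof -
  let ?W = "A \<times> ball y0 r"
  have W: "open ?W" using A by (simp add: open_Times)
  have F: "smooth ?W (\<lambda>z. \<phi> z (0, v) $ \<alpha>)" if "v \<in> Basis" for v \<alpha>
    using smooth_formD[OF \<phi> vertical_in_Basis[OF that]] .
  have closed: "pd (0, v) (\<lambda>y. \<phi> y (0, w) $ \<alpha>) z = pd (0, w) (\<lambda>y. \<phi> y (0, v) $ \<alpha>) z"
    if z: "z \<in> ?W" and v: "v \<in> Basis" and w: "w \<in> Basis" for z v w \<alpha>
  proof (rule pull_fst_vertical_closed[OF W z \<psi> _ eq[OF z vertical_in_Basis[OF v] vertical_in_Basis[OF w]] v w])
    show "(\<lambda>x. \<Gamma> x c $ \<alpha> $ \<beta>) differentiable (at (fst z))" if "c \<in> Basis" for c \<alpha> \<beta>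
      using smooth_connection_imp_differentiable[OF \<Gamma> A _ that] z by auto
  qed
  define \<theta> where "\<theta> z = (\<chi> \<alpha>. integral {0..1}
      (\<lambda>s. \<Sum>v\<in>Basis. \<phi> (fst z, y0 + s *\<^sub>R (snd z - y0)) (0, v) $ \<alpha> * ((snd z - y0) \<bullet> v)))" for z
  have primitive: "smooth ?W (\<lambda>z. \<theta> z $ \<alpha>)"
    "\<And>z w. z \<in> ?W \<Longrightarrow> w \<in> Basis \<Longrightarrow> pd (0, w) (\<lambda>z. \<theta> z $ \<alpha>) z = \<phi> z (0, w) $ \<alpha>" for \<alpha>
    using vertical_primitive[where F="\<lambda>v z. \<phi> z (0, v) $ \<alpha>", OF A F closed]
    by (simp_all add: \<theta>_def)
  show ?thesis
  proof
    show "smooth_sec ?W \<theta>"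
      using primitive(1) by (simp add: smooth_sec_def)
    show "Dconn (pull_fst \<Gamma>) \<theta> z (0, w) = \<phi> z (0, w)" if "z \<in> ?W" "w \<in> Basis" for z w
      using primitive(2)[OF that] by (simp add: Dconn_def vec_eq_iff)
  qed
qed

lemma pull_fst_horizontal_constant:
  fixes \<Gamma> :: "'a::euclidean_space \<Rightarrow> 'a \<Rightarrow> real^'k^'k"
    and \<phi> :: "'a \<times> 'b::euclidean_space \<Rightarrow> 'a \<times> 'b \<Rightarrow> real^'k"
  assumes A: "open A" and \<phi>: "smooth_form (A \<times> ball y0 r) \<phi>" and \<Gamma>: "smooth_connection A \<Gamma>"
    and vertical: "\<And>z w. z \<in> A \<times> ball y0 r \<Longrightarrow> w \<in> Basis \<Longrightarrow> \<phi> z (0, w) = 0"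
    and eq: "\<And>z c d. z \<in> A \<times> ball y0 r \<Longrightarrow> c \<in> Basis \<Longrightarrow> d \<in> Basis \<Longrightarrow>
               Dwedge (pull_fst \<Gamma>) \<phi> z c d = curv (pull_fst \<Gamma>) z c d *v \<xi> z"
    and xy: "(x, y) \<in> A \<times> ball y0 r" and a: "a \<in> Basis"
  shows "\<phi> (x, y) (a, 0) = \<phi> (x, y0) (a, 0)"
proof -
  let ?W = "A \<times> ball y0 r"
  have W: "open ?W" using A by (simp add: open_Times)
  have "pd (0, w) (\<lambda>z. \<phi> z (a, 0) $ \<alpha>) z = 0" if z: "z \<in> ?W" and w: "w \<in> Basis" for z w \<alpha>
  proof -
    have "pd (a, 0) (\<lambda>y. \<phi> y (0, w) $ \<alpha>) z = pd (a, 0) (\<lambda>y. 0) z"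
      by (rule pd_cong_open[OF W z]) (simp add: vertical w)
    moreover have "curv (pull_fst \<Gamma>) z (a, 0) (0, w) = 0"
      using smooth_connection_imp_differentiable[OF \<Gamma> A] z
      by (intro curv_pull_fst_vertical(2) horizontal_in_Basis[OF a]) auto
    then have "Dwedge (pull_fst \<Gamma>) \<phi> z (a, 0) (0, w) $ \<alpha> = 0"
      using eq[OF z horizontal_in_Basis[OF a] vertical_in_Basis[OF w]] by simp
    ultimately show ?thesis
      using vertical[OF z w] a by (simp add: Dwedge_def pd_const)
  qed
  then have "\<phi> (x, y) (a, 0) $ \<alpha> = \<phi> (x, y0) (a, 0) $ \<alpha>" for \<alpha>
    by (intro constant_on_fibres[OF W smooth_formD[OF \<phi> horizontal_in_Basis[OF a]] _ xy])
  then show ?thesis by (simp add: vec_eq_iff)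
qed

lemma pull_fst_slice_equation:
  fixes \<Gamma> :: "'a::euclidean_space \<Rightarrow> 'a \<Rightarrow> real^'k^'k"
    and \<phi> :: "'a \<times> 'b::euclidean_space \<Rightarrow> 'a \<times> 'b \<Rightarrow> real^'k"
  assumes A: "open A" "x \<in> A" and r: "0 < r" and \<Gamma>: "smooth_connection A \<Gamma>"
    and \<phi>: "smooth_form (A \<times> ball y0 r) \<phi>" and \<xi>: "smooth_sec (A \<times> ball y0 r) \<xi>"
    and eq: "\<And>z c d. z \<in> A \<times> ball y0 r \<Longrightarrow> c \<in> Basis \<Longrightarrow> d \<in> Basis \<Longrightarrow>
               Dwedge (pull_fst \<Gamma>) \<phi> z c d = curv (pull_fst \<Gamma>) z c d *v \<xi> z"
    and a: "a \<in> Basis" and b: "b \<in> Basis"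
  shows "Dwedge \<Gamma> (\<lambda>x c. \<phi> (x, y0) (c, 0)) x a b = kappa \<Gamma> (\<lambda>x. \<xi> (x, y0)) x a b"
proof -
  let ?W = "A \<times> ball y0 r"
  have W: "open ?W" using A by (simp add: open_Times)
  have slice: "(\<lambda>x. (x, y0)) ` A \<subseteq> ?W" and xy0: "(x, y0) \<in> ?W" using A r by auto
  have \<Gamma>_diff: "(\<lambda>x. \<Gamma> x c $ \<alpha> $ \<beta>) differentiable (at x)" if "c \<in> Basis" for c \<alpha> \<beta>
    using smooth_connection_imp_differentiable[OF \<Gamma> A(1,2) that] .
  have "pd e (\<lambda>x. \<phi> (x, y0) (c, 0) $ \<alpha>) x = pd (e, 0) (\<lambda>z. \<phi> z (c, 0) $ \<alpha>) (x, y0)"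
    if "c \<in> Basis" for c e \<alpha>
    using smooth_imp_differentiable[OF smooth_formD[OF \<phi> horizontal_in_Basis[OF that]] W xy0]
    by (rule pd_slice_fst)
  then have "Dwedge \<Gamma> (\<lambda>x c. \<phi> (x, y0) (c, 0)) x a b = Dwedge (pull_fst \<Gamma>) \<phi> (x, y0) (a, 0) (b, 0)"
    using a b by (simp add: Dwedge_def vec_eq_iff)
  also have "\<dots> = curv \<Gamma> x a b *v \<xi> (x, y0)"
    using eq[OF xy0 horizontal_in_Basis[OF a] horizontal_in_Basis[OF b]]
      curv_pull_fst_horizontal[of \<Gamma> "(x, y0)", unfolded fst_conv, OF \<Gamma>_diff a b] by simp
  also have "\<dots> = kappa \<Gamma> (\<lambda>x. \<xi> (x, y0)) x a b"
  proof (rule kappa_eq_curv[OF A _ \<Gamma>_diff a b, symmetric])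
    show "smooth_sec A (\<lambda>x. \<xi> (x, y0))"
      using smooth_slice[OF smooth_secD[OF \<xi>] W A(1) slice] by (simp add: smooth_sec_def)
  qed
  finally show ?thesis .
qed

lemma pull_fst_reduce_to_base:
  fixes \<Gamma> :: "'a::euclidean_space \<Rightarrow> 'a \<Rightarrow> real^'k^'k"
    and \<phi> :: "'a \<times> 'b::euclidean_space \<Rightarrow> 'a \<times> 'b \<Rightarrow> real^'k"
  assumes A: "open A" and r: "0 < r" and \<Gamma>: "smooth_connection A \<Gamma>"
    and \<phi>: "smooth_form (A \<times> ball y0 r) \<phi>" and \<psi>: "smooth_sec (A \<times> ball y0 r) \<psi>"
    and eq: "\<And>z c d. z \<in> A \<times> ball y0 r \<Longrightarrow> c \<in> Basis \<Longrightarrow> d \<in> Basis \<Longrightarrow>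
               Dwedge (pull_fst \<Gamma>) \<phi> z c d = kappa (pull_fst \<Gamma>) \<psi> z c d"
  obtains \<theta> \<phi>0 \<psi>0 where "smooth_sec (A \<times> ball y0 r) \<theta>" "smooth_form A \<phi>0" "smooth_sec A \<psi>0"
    "\<And>x a b. x \<in> A \<Longrightarrow> a \<in> Basis \<Longrightarrow> b \<in> Basis \<Longrightarrow> Dwedge \<Gamma> \<phi>0 x a b = kappa \<Gamma> \<psi>0 x a b"
    "\<And>z w. z \<in> A \<times> ball y0 r \<Longrightarrow> w \<in> Basis \<Longrightarrow> \<phi> z (0, w) = Dconn (pull_fst \<Gamma>) \<theta> z (0, w)"
    "\<And>z a. z \<in> A \<times> ball y0 r \<Longrightarrow> a \<in> Basis \<Longrightarrow> \<phi> z (a, 0) = Dconn (pull_fst \<Gamma>) \<theta> z (a, 0) + \<phi>0 (fst z) a"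
proof -
  let ?W = "A \<times> ball y0 r"
  have W: "open ?W" using A by (simp add: open_Times)
  have slice: "(\<lambda>x. (x, y0)) ` A \<subseteq> ?W" using r by auto
  have P: "smooth ?W (\<lambda>z. pull_fst \<Gamma> z c $ \<alpha> $ \<beta>)" if "c \<in> Basis" for c \<alpha> \<beta>
    using smooth_connection_pull_fst[OF A W _ \<Gamma>] that by (auto simp: smooth_connection_def)
  obtain \<theta> where \<theta>: "smooth_sec ?W \<theta>"
    and \<theta>_vertical: "\<And>z w. z \<in> ?W \<Longrightarrow> w \<in> Basis \<Longrightarrow> Dconn (pull_fst \<Gamma>) \<theta> z (0, w) = \<phi> z (0, w)"
    using pull_fst_vertical_gauge[OF A \<phi> \<psi> \<Gamma> eq] by blast
  define \<phi>' where "\<phi>' z c = \<phi> z c - Dconn (pull_fst \<Gamma>) \<theta> z c" for z c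
  have \<phi>': "smooth_form ?W \<phi>'"
    unfolding smooth_form_def smooth_sec_def \<phi>'_def
    by (auto intro!: smooth_diff[OF W] smooth_formD[OF \<phi>] smooth_Dconn[OF W _ \<theta> P])
  have \<psi>\<theta>: "smooth_sec ?W (\<lambda>z. \<psi> z - \<theta> z)"
    using \<psi> \<theta> by (auto simp: smooth_sec_def intro!: smooth_diff[OF W])
  have eq': "Dwedge (pull_fst \<Gamma>) \<phi>' z c d = curv (pull_fst \<Gamma>) z c d *v (\<psi> z - \<theta> z)"
    if "z \<in> ?W" "c \<in> Basis" "d \<in> Basis" for z c d
    unfolding \<phi>'_def by (rule Dwedge_gauge[OF W that(1) \<phi> \<psi> \<theta> P eq[OF that] that(2,3)])
  have vertical: "\<phi>' z (0, w) = 0" if "z \<in> ?W" "w \<in> Basis" for z w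
    using \<theta>_vertical[OF that] by (simp add: \<phi>'_def)
  show ?thesis
  proof
    show "smooth_form A (\<lambda>x c. \<phi>' (x, y0) (c, 0))"
      using smooth_slice[OF smooth_formD[OF \<phi>' horizontal_in_Basis] W A slice]
      by (simp add: smooth_form_def smooth_sec_def)
    show "smooth_sec A (\<lambda>x. \<psi> (x, y0) - \<theta> (x, y0))"
      using smooth_slice[OF smooth_secD[OF \<psi>\<theta>] W A slice] by (simp add: smooth_sec_def)
    show "Dwedge \<Gamma> (\<lambda>x c. \<phi>' (x, y0) (c, 0)) x a b = kappa \<Gamma> (\<lambda>x. \<psi> (x, y0) - \<theta> (x, y0)) x a b"
      if "x \<in> A" "a \<in> Basis" "b \<in> Basis" for x a b
      using pull_fst_slice_equation[OF A that(1) r \<Gamma> \<phi>' \<psi>\<theta> eq' that(2,3)] .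
    show "\<phi> z (0, w) = Dconn (pull_fst \<Gamma>) \<theta> z (0, w)" if "z \<in> ?W" "w \<in> Basis" for z w
      using \<theta>_vertical[OF that] by simp
    show "\<phi> z (a, 0) = Dconn (pull_fst \<Gamma>) \<theta> z (a, 0) + \<phi>' (fst z, y0) (a, 0)"
      if "z \<in> ?W" "a \<in> Basis" for z a
    proof -
      have "\<phi>' z (a, 0) = \<phi>' (fst z, y0) (a, 0)"
        using pull_fst_horizontal_constant[OF A \<phi>' \<Gamma> vertical eq', of "fst z" "snd z" a] that by simp
      then show ?thesis by (metis \<phi>'_def add.commute diff_add_cancel)
    qed
  qed (rule \<theta>)
qed

lemma Dconn_pull_fst_add_compose_fst:
  assumes W: "open W" "z \<in> W" and \<theta>: "smooth_sec W \<theta>"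
    and W1: "open W1" "fst ` W \<subseteq> W1" and \<eta>: "smooth_sec W1 \<eta>"
  shows "a \<in> Basis \<Longrightarrow> Dconn (pull_fst \<Gamma>) (\<lambda>z. \<theta> z + \<eta> (fst z)) z (a, 0)
                          = Dconn (pull_fst \<Gamma>) \<theta> z (a, 0) + Dconn \<Gamma> \<eta> (fst z) a"
    and "Dconn (pull_fst \<Gamma>) (\<lambda>z. \<theta> z + \<eta> (fst z)) z (0, w) = Dconn (pull_fst \<Gamma>) \<theta> z (0, w)"
proof -
  have \<eta>_diff: "(\<lambda>x. \<eta> x $ \<alpha>) differentiable (at (fst z))" for \<alpha>
    using smooth_imp_differentiable[OF smooth_secD[OF \<eta>] W1(1)] W1(2) W(2) by blast
  have \<eta>_fst: "smooth_sec W (\<lambda>z. \<eta> (fst z))"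
    by (rule smooth_sec_compose_linear[OF \<eta> W(1) W1(1) W1(2) bounded_linear_fst])
  have "Dconn (pull_fst \<Gamma>) (\<lambda>z. \<theta> z + \<eta> (fst z)) z c
        = Dconn (pull_fst \<Gamma>) \<theta> z c + Dconn (pull_fst \<Gamma>) (\<lambda>z. \<eta> (fst z)) z c" for c
    using smooth_imp_differentiable[OF smooth_secD[OF \<theta>] W] smooth_imp_differentiable[OF smooth_secD[OF \<eta>_fst] W]
    by (rule Dconn_add)
  then show "a \<in> Basis \<Longrightarrow> Dconn (pull_fst \<Gamma>) (\<lambda>z. \<theta> z + \<eta> (fst z)) z (a, 0)
               = Dconn (pull_fst \<Gamma>) \<theta> z (a, 0) + Dconn \<Gamma> \<eta> (fst z) a"
    and "Dconn (pull_fst \<Gamma>) (\<lambda>z. \<theta> z + \<eta> (fst z)) z (0, w) = Dconn (pull_fst \<Gamma>) \<theta> z (0, w)"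
    by (simp_all add: Dconn_pull_fst_compose_fst[OF \<eta>_diff])
qed

lemma Times_ball_neighbourhood:
  assumes "open V" "(x0, y0) \<in> V"
  obtains A r where "open A" "x0 \<in> A" "0 < r" "A \<times> ball y0 r \<subseteq> V"
proof -
  obtain A B where "open A" "x0 \<in> A" "open B" "y0 \<in> B" "A \<times> B \<subseteq> V"
    using open_prod_elim[OF assms] by (metis mem_Times_iff fst_conv snd_conv)
  moreover obtain r where "0 < r" "ball y0 r \<subseteq> B" using \<open>open B\<close> \<open>y0 \<in> B\<close> openE by blast
  ultimately show ?thesis using that by (meson order_trans Sigma_mono order_refl)
qed

lemma pull_fst_local_primitive:
  fixes \<Gamma> :: "'a::euclidean_space \<Rightarrow> 'a \<Rightarrow> real^'k^'k"
    and \<phi> :: "'a \<times> 'b::euclidean_space \<Rightarrow> 'a \<times> 'b \<Rightarrow> real^'k"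
  assumes U: "open U" and ex: "exact_connection U \<Gamma>"
    and V: "open V" "V \<subseteq> U \<times> Ub" and \<phi>: "smooth_form V \<phi>" and \<psi>: "smooth_sec V \<psi>"
    and eq: "\<And>z c d. z \<in> V \<Longrightarrow> c \<in> Basis \<Longrightarrow> d \<in> Basis \<Longrightarrow>
               Dwedge (pull_fst \<Gamma>) \<phi> z c d = kappa (pull_fst \<Gamma>) \<psi> z c d"
    and z0: "z0 \<in> V"
  shows "\<exists>W \<eta>. open W \<and> z0 \<in> W \<and> W \<subseteq> V \<and> smooth_sec W \<eta> \<and>
           (\<forall>z\<in>W. \<forall>c\<in>Basis. \<phi> z c = Dconn (pull_fst \<Gamma>) \<eta> z c)"
proof -
  obtain x0 y0 where z0_eq: "z0 = (x0, y0)" by fastforce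
  obtain A r where A: "open A" "x0 \<in> A" and r: "0 < r" and W0V: "A \<times> ball y0 r \<subseteq> V"
    using Times_ball_neighbourhood[OF V(1)] z0 z0_eq by blast
  let ?Box = "A \<times> ball y0 r"
  have AU: "A \<subseteq> U"
  proof
    fix x assume "x \<in> A"
    then have "(x, y0) \<in> ?Box" using r by simp
    then have "(x, y0) \<in> U \<times> Ub" using W0V V(2) by blast
    then show "x \<in> U" by simp
  qed
  have eq_W0: "\<And>z c d. z \<in> ?Box \<Longrightarrow> c \<in> Basis \<Longrightarrow> d \<in> Basis \<Longrightarrow>
                 Dwedge (pull_fst \<Gamma>) \<phi> z c d = kappa (pull_fst \<Gamma>) \<psi> z c d"
    using eq W0V by blast
  have \<Gamma>: "smooth_connection A \<Gamma>"
    using smooth_connection_subset[OF exact_connectionD(1)[OF ex] AU] .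
  obtain \<theta> \<phi>0 \<psi>0 where \<theta>: "smooth_sec ?Box \<theta>" and \<phi>0: "smooth_form A \<phi>0" "smooth_sec A \<psi>0"
    and eq0: "\<And>x a b. x \<in> A \<Longrightarrow> a \<in> Basis \<Longrightarrow> b \<in> Basis \<Longrightarrow> Dwedge \<Gamma> \<phi>0 x a b = kappa \<Gamma> \<psi>0 x a b"
    and vertical: "\<And>z w. z \<in> ?Box \<Longrightarrow> w \<in> Basis \<Longrightarrow> \<phi> z (0, w) = Dconn (pull_fst \<Gamma>) \<theta> z (0, w)"
    and horizontal: "\<And>z a. z \<in> ?Box \<Longrightarrow> a \<in> Basis \<Longrightarrow>
                       \<phi> z (a, 0) = Dconn (pull_fst \<Gamma>) \<theta> z (a, 0) + \<phi>0 (fst z) a"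
    using pull_fst_reduce_to_base[OF A(1) r(1) \<Gamma> smooth_form_subset[OF \<phi> W0V] smooth_sec_subset[OF \<psi> W0V] eq_W0]
    by blast
  obtain W1 \<eta>1 where W1: "open W1" "x0 \<in> W1" "W1 \<subseteq> A" and \<eta>1: "smooth_sec W1 \<eta>1"
    and prim1: "\<And>x a. x \<in> W1 \<Longrightarrow> a \<in> Basis \<Longrightarrow> \<phi>0 x a = Dconn \<Gamma> \<eta>1 x a"
    using exact_connectionE[OF ex A(1) AU \<phi>0 eq0 A(2)] by blast
  let ?W = "W1 \<times> ball y0 r"
  have W: "open ?W" using W1 by (simp add: open_Times)
  have WW0: "?W \<subseteq> ?Box" using W1 by auto
  have \<theta>W: "smooth_sec ?W \<theta>" using smooth_sec_subset[OF \<theta> WW0] .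
  have \<eta>1_fst: "smooth_sec ?W (\<lambda>z. \<eta>1 (fst z))"
    by (rule smooth_sec_compose_linear[OF \<eta>1 W W1(1) _ bounded_linear_fst]) auto
  have "\<phi> z c = Dconn (pull_fst \<Gamma>) (\<lambda>z. \<theta> z + \<eta>1 (fst z)) z c" if z: "z \<in> ?W" and c: "c \<in> Basis" for z c
    using c z WW0 W1(3) Dconn_pull_fst_add_compose_fst[OF W z \<theta>W W1(1) _ \<eta>1]
    by (cases rule: prod_Basis_cases) (auto simp: vertical horizontal prim1)
  moreover have "z0 \<in> ?W" using W1 r z0_eq by simp
  moreover have "smooth_sec ?W (\<lambda>z. \<theta> z + \<eta>1 (fst z))"
    using \<theta>W \<eta>1_fst by (auto simp: smooth_sec_def intro: smooth_add[OF W])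
  ultimately show ?thesis using W WW0 W0V by blast
qed

lemma exact_connection_pull_fst:
  fixes \<Gamma> :: "'a::euclidean_space \<Rightarrow> 'a \<Rightarrow> real^'k^'k"
  assumes U: "open U" and Ub: "open Ub" and ex: "exact_connection U \<Gamma>"
  shows "exact_connection (U \<times> Ub) (pull_fst \<Gamma> :: 'a \<times> 'b::euclidean_space \<Rightarrow> _)"
proof (rule exact_connectionI)
  note \<Gamma> = exact_connectionD(1)[OF ex] and rank = exact_connectionD(2)[OF ex]
  show "smooth_connection (U \<times> Ub) (pull_fst \<Gamma> :: 'a \<times> 'b \<Rightarrow> _)"
    by (rule smooth_connection_pull_fst[OF U open_Times[OF U Ub] _ \<Gamma>]) auto
  have "curv_rank (pull_fst \<Gamma>) z = curv_rank \<Gamma> (fst z)" if "z \<in> U \<times> Ub" for z :: "'a \<times> 'b"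
  proof -
    have "curv_kernel (pull_fst \<Gamma>) z = curv_kernel \<Gamma> (fst z)"
      by (rule curv_kernel_pull_fst) (use that smooth_connection_imp_differentiable[OF \<Gamma> U] in auto)
    then show ?thesis by (simp add: curv_rank_curv_kernel)
  qed
  then show "curv_rank (pull_fst \<Gamma>) z = curv_rank (pull_fst \<Gamma>) z'"
    if "z \<in> U \<times> Ub" "z' \<in> U \<times> Ub" for z z' :: "'a \<times> 'b"
    using rank[of "fst z" "fst z'"] that by auto
qed (rule pull_fst_local_primitive[OF U ex]; assumption)

section \<open>Transport along a linear isomorphism\<close>

lemma Dconn_transport:
  assumes T: "bounded_linear T" and \<eta>: "\<And>\<alpha>. (\<lambda>x. \<eta> x $ \<alpha>) differentiable (at (T z))"
  shows "Dconn (\<lambda>z c. G (T z) (T c)) (\<lambda>z. \<eta> (T z)) z c = Dconn G \<eta> (T z) (T c)"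
  using pd_compose_linear[OF T \<eta>] by (simp add: Dconn_def vec_eq_iff)

lemma Dwedge_transport:
  assumes T: "bounded_linear T"
    and \<phi>: "\<And>e \<alpha>. e \<in> {a, b} \<Longrightarrow> (\<lambda>x. \<phi> x (T e) $ \<alpha>) differentiable (at (T z))"
  shows "Dwedge (\<lambda>z c. G (T z) (T c)) (\<lambda>z c. \<phi> (T z) (T c)) z a b = Dwedge G \<phi> (T z) (T a) (T b)"
  using pd_compose_linear[OF T \<phi>] by (simp add: Dwedge_def vec_eq_iff)

lemma curv_transport:
  assumes T: "bounded_linear T" and G: "\<And>e \<alpha> \<beta>. e \<in> {c, d} \<Longrightarrow> (\<lambda>x. G x (T e) $ \<alpha> $ \<beta>) differentiable (at (T z))"
  shows "curv (\<lambda>z c. G (T z) (T c)) z c d = curv G (T z) (T c) (T d)"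
  using pd_compose_linear[OF T G] by (simp add: curv_def vec_eq_iff)

lemma curv_kernel_transport:
  fixes T :: "'a::euclidean_space \<Rightarrow> 'b::euclidean_space"
  assumes T: "bounded_linear T" and T_T': "\<And>x. T (T' x) = x"
    and T_Basis: "\<And>b. b \<in> Basis \<Longrightarrow> T b \<in> Basis" and T'_Basis: "\<And>b. b \<in> Basis \<Longrightarrow> T' b \<in> Basis"
    and G: "\<And>e \<alpha> \<beta>. e \<in> Basis \<Longrightarrow> (\<lambda>x. G x e $ \<alpha> $ \<beta>) differentiable (at (T z))"
  shows "curv_kernel (\<lambda>z c. G (T z) (T c)) z = curv_kernel G (T z)"
proof -
  have curv: "curv (\<lambda>z c. G (T z) (T c)) z c d = curv G (T z) (T c) (T d)" if "c \<in> Basis" "d \<in> Basis" for c d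
    using that T_Basis G by (intro curv_transport[OF T]) auto
  show ?thesis
    unfolding curv_kernel_def
  proof (intro Collect_cong iffI ballI)
    fix v and c d :: 'b
    assume "\<forall>c\<in>Basis. \<forall>d\<in>Basis. curv (\<lambda>z c. G (T z) (T c)) z c d *v v = 0" "c \<in> Basis" "d \<in> Basis"
    then show "curv G (T z) c d *v v = 0"
      using curv[OF T'_Basis T'_Basis] T'_Basis T_T' by metis
  next
    fix v and c d :: 'a
    assume "\<forall>c\<in>Basis. \<forall>d\<in>Basis. curv G (T z) c d *v v = 0" "c \<in> Basis" "d \<in> Basis"
    then show "curv (\<lambda>z c. G (T z) (T c)) z c d *v v = 0"
      using curv T_Basis by simp
  qed
qed

lemma transport_equation:
  fixes T :: "'d::euclidean_space \<Rightarrow> 'c::euclidean_space" and G :: "'c \<Rightarrow> 'c \<Rightarrow> real^'k^'k"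
  assumes T: "bounded_linear T" and T': "bounded_linear T'"
    and T_T': "\<And>x. T (T' x) = x" and T'_T: "\<And>x. T' (T x) = x"
    and T_Basis: "\<And>b. b \<in> Basis \<Longrightarrow> T b \<in> Basis" and T'_Basis: "\<And>b. b \<in> Basis \<Longrightarrow> T' b \<in> Basis"
    and Om: "open Om" and G: "smooth_connection Om G"
    and V: "open V" "V \<subseteq> T -` Om" and \<phi>: "smooth_form V \<phi>" and \<psi>: "smooth_sec V \<psi>"
    and eq: "\<And>z a b. z \<in> V \<Longrightarrow> a \<in> Basis \<Longrightarrow> b \<in> Basis \<Longrightarrow>
               Dwedge (\<lambda>z c. G (T z) (T c)) \<phi> z a b = kappa (\<lambda>z c. G (T z) (T c)) \<psi> z a b"
    and z: "T' w \<in> V" and a: "a \<in> Basis" and b: "b \<in> Basis"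
  shows "Dwedge G (\<lambda>w e. \<phi> (T' w) (T' e)) w a b = kappa G (\<lambda>w. \<psi> (T' w)) w a b"
proof -
  let ?GT = "\<lambda>z c. G (T z) (T c)" and ?V' = "T' -` V" and ?z = "T' w"
  have V': "open ?V'" by (rule continuous_open_vimage[OF V(1) linear_continuous_at[OF T']])
  have w: "w \<in> ?V'" and Tz: "T ?z \<in> Om" using z V(2) by auto
  have G_diff: "(\<lambda>x. G x c $ \<alpha> $ \<beta>) differentiable (at (T ?z))" if "c \<in> Basis" for c \<alpha> \<beta>
    using smooth_connection_imp_differentiable[OF G Om Tz that] .
  have GT: "smooth V (\<lambda>z. ?GT z c $ \<alpha> $ \<beta>)" if "c \<in> Basis" for c \<alpha> \<beta>
    using G T_Basis that V(2) unfolding smooth_connection_def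
    by (auto intro!: smooth_compose_linear[OF V(1) Om _ T])
  have \<phi>': "smooth_form ?V' (\<lambda>w e. \<phi> (T' w) (T' e))"
    by (rule smooth_form_compose_linear[OF \<phi> V' V(1) _ T' T'_Basis]) auto
  have "(\<lambda>x. \<phi> (T' x) (T' (T e)) $ \<alpha>) differentiable (at (T ?z))" if "e \<in> {T' a, T' b}" for e \<alpha>
    using smooth_imp_differentiable[OF smooth_formD[OF \<phi>'] V'] w a b T_T' that by auto
  from Dwedge_transport[where \<phi>="\<lambda>x e. \<phi> (T' x) (T' e)" and a="T' a" and b="T' b" and z="T' w" and G=G,
      OF T this]
  have "Dwedge G (\<lambda>w e. \<phi> (T' w) (T' e)) w a b = Dwedge ?GT \<phi> ?z (T' a) (T' b)"
    by (simp add: T_T' T'_T)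
  also have "\<dots> = curv ?GT ?z (T' a) (T' b) *v \<psi> ?z"
    using eq[OF z T'_Basis[OF a] T'_Basis[OF b]]
      kappa_eq_curv[OF V(1) z \<psi> smooth_imp_differentiable[OF GT V(1) z] T'_Basis[OF a] T'_Basis[OF b]]
    by simp
  also have "curv ?GT ?z (T' a) (T' b) = curv G w a b"
  proof -
    have "(\<lambda>x. G x (T e) $ \<alpha> $ \<beta>) differentiable (at (T ?z))" if "e \<in> {T' a, T' b}" for e \<alpha> \<beta>
      using G_diff that a b T_T' by auto
    from curv_transport[where G=G and c="T' a" and d="T' b" and z="T' w", OF T this]
    show ?thesis by (simp add: T_T')
  qed
  also have "curv G w a b *v \<psi> ?z = kappa G (\<lambda>w. \<psi> (T' w)) w a b"
    using G_diff T_T' smooth_sec_compose_linear[OF \<psi> V' V(1) _ T']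
    by (intro kappa_eq_curv[OF V' w _ _ a b, symmetric]) auto
  finally show ?thesis .
qed

lemma transport_local_primitive:
  fixes T :: "'d::euclidean_space \<Rightarrow> 'c::euclidean_space" and G :: "'c \<Rightarrow> 'c \<Rightarrow> real^'k^'k"
  assumes T: "bounded_linear T" and T': "bounded_linear T'"
    and T_T': "\<And>x. T (T' x) = x" and T'_T: "\<And>x. T' (T x) = x"
    and T_Basis: "\<And>b. b \<in> Basis \<Longrightarrow> T b \<in> Basis" and T'_Basis: "\<And>b. b \<in> Basis \<Longrightarrow> T' b \<in> Basis"
    and Om: "open Om" and ex: "exact_connection Om G"
    and V: "open V" "V \<subseteq> T -` Om" and \<phi>: "smooth_form V \<phi>" and \<psi>: "smooth_sec V \<psi>"
    and eq: "\<And>z a b. z \<in> V \<Longrightarrow> a \<in> Basis \<Longrightarrow> b \<in> Basis \<Longrightarrow>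
               Dwedge (\<lambda>z c. G (T z) (T c)) \<phi> z a b = kappa (\<lambda>z c. G (T z) (T c)) \<psi> z a b"
    and z0: "z0 \<in> V"
  shows "\<exists>W \<eta>. open W \<and> z0 \<in> W \<and> W \<subseteq> V \<and> smooth_sec W \<eta> \<and>
           (\<forall>z\<in>W. \<forall>c\<in>Basis. \<phi> z c = Dconn (\<lambda>z c. G (T z) (T c)) \<eta> z c)"
proof -
  let ?V' = "T' -` V"
  have V': "open ?V'" by (rule continuous_open_vimage[OF V(1) linear_continuous_at[OF T']])
  have V'Om: "?V' \<subseteq> Om"
  proof
    fix w assume "w \<in> ?V'"
    then have "T (T' w) \<in> Om" using V(2) by auto
    then show "w \<in> Om" by (simp add: T_T')
  qed
  have \<phi>': "smooth_form ?V' (\<lambda>w e. \<phi> (T' w) (T' e))"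
    by (rule smooth_form_compose_linear[OF \<phi> V' V(1) _ T' T'_Basis]) auto
  have \<psi>': "smooth_sec ?V' (\<lambda>w. \<psi> (T' w))"
    by (rule smooth_sec_compose_linear[OF \<psi> V' V(1) _ T']) auto
  have Tz0: "T z0 \<in> ?V'" using z0 by (simp add: T'_T)
  obtain W' \<eta>' where W': "open W'" "T z0 \<in> W'" "W' \<subseteq> ?V'" and \<eta>': "smooth_sec W' \<eta>'"
    and prim: "\<And>w a. w \<in> W' \<Longrightarrow> a \<in> Basis \<Longrightarrow> \<phi> (T' w) (T' a) = Dconn G \<eta>' w a"
    using exact_connectionE[OF ex V' V'Om \<phi>' \<psi>'
        transport_equation[OF T T' T_T' T'_T T_Basis T'_Basis Om exact_connectionD(1)[OF ex] V \<phi> \<psi> eq] Tz0]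
    by auto
  let ?W = "T -` W'"
  have W: "open ?W" by (rule continuous_open_vimage[OF W'(1) linear_continuous_at[OF T]])
  have WV: "?W \<subseteq> V"
  proof
    fix z assume "z \<in> ?W"
    then have "T' (T z) \<in> V" using W'(3) by auto
    then show "z \<in> V" by (simp add: T'_T)
  qed
  have "\<phi> z c = Dconn (\<lambda>z c. G (T z) (T c)) (\<lambda>z. \<eta>' (T z)) z c" if "z \<in> ?W" "c \<in> Basis" for z c
    using Dconn_transport[OF T smooth_imp_differentiable[OF smooth_secD[OF \<eta>'] W'(1)]]
      prim[of "T z" "T c"] T_Basis that by (simp add: T'_T)
  moreover have "smooth_sec ?W (\<lambda>z. \<eta>' (T z))"
    by (rule smooth_sec_compose_linear[OF \<eta>' W W'(1) _ T]) auto
  ultimately show ?thesis using W W'(2) WV by blast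
qed

lemma exact_connection_transport:
  fixes T :: "'d::euclidean_space \<Rightarrow> 'c::euclidean_space" and G :: "'c \<Rightarrow> 'c \<Rightarrow> real^'k^'k"
  assumes T: "bounded_linear T" and T': "bounded_linear T'"
    and T_T': "\<And>x. T (T' x) = x" and T'_T: "\<And>x. T' (T x) = x"
    and T_Basis: "\<And>b. b \<in> Basis \<Longrightarrow> T b \<in> Basis" and T'_Basis: "\<And>b. b \<in> Basis \<Longrightarrow> T' b \<in> Basis"
    and Om: "open Om" and ex: "exact_connection Om G"
  shows "exact_connection (T -` Om) (\<lambda>z c. G (T z) (T c))"
proof (rule exact_connectionI)
  note G = exact_connectionD(1)[OF ex]
  have Om': "open (T -` Om)" by (rule continuous_open_vimage[OF Om linear_continuous_at[OF T]])
  show "smooth_connection (T -` Om) (\<lambda>z c. G (T z) (T c))"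
    using G T_Basis unfolding smooth_connection_def
    by (auto intro!: smooth_compose_linear[OF Om' Om _ T])
  have "curv_rank (\<lambda>z c. G (T z) (T c)) z = curv_rank G (T z)" if "z \<in> T -` Om" for z
  proof -
    have "curv_kernel (\<lambda>z c. G (T z) (T c)) z = curv_kernel G (T z)"
      by (rule curv_kernel_transport[OF T T_T' T_Basis T'_Basis])
         (use that smooth_connection_imp_differentiable[OF G Om] in auto)
    then show ?thesis by (simp add: curv_rank_curv_kernel)
  qed
  then show "curv_rank (\<lambda>z c. G (T z) (T c)) z = curv_rank (\<lambda>z c. G (T z) (T c)) z'"
    if "z \<in> T -` Om" "z' \<in> T -` Om" for z z'
    using exact_connectionD(2)[OF ex, of "T z" "T z'"] that by auto
qed (rule transport_local_primitive[OF T T' T_T' T'_T T_Basis T'_Basis Om ex]; assumption)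

lemma exact_connection_pull_snd:
  fixes \<Gamma> :: "'b::euclidean_space \<Rightarrow> 'b \<Rightarrow> real^'l^'l"
  assumes U: "open U" and Ub: "open Ub" and ex: "exact_connection Ub \<Gamma>"
  shows "exact_connection (U \<times> Ub) (pull_snd \<Gamma> :: 'a::euclidean_space \<times> 'b \<Rightarrow> _)"
proof -
  let ?T = "\<lambda>z :: 'a \<times> 'b. (snd z, fst z)" and ?T' = "\<lambda>z :: 'b \<times> 'a. (snd z, fst z)"
  have T: "bounded_linear ?T" and T': "bounded_linear ?T'"
    by (intro bounded_linear_Pair bounded_linear_fst bounded_linear_snd)+
  have "exact_connection (?T -` (Ub \<times> U)) (\<lambda>z c. pull_fst \<Gamma> (?T z) (?T c))"
    by (rule exact_connection_transport[OF T T' _ _ _ _ open_Times[OF Ub U] exact_connection_pull_fst[OF Ub U ex]])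
       (auto simp: Basis_prod_def)
  moreover have "?T -` (Ub \<times> U) = U \<times> Ub" by auto
  moreover have "(\<lambda>z c. pull_fst \<Gamma> (?T z) (?T c)) = pull_snd \<Gamma>"
    by (simp add: pull_fst_def pull_snd_def fun_eq_iff)
  ultimately show ?thesis by simp
qed

section \<open>Direct sums\<close>

definition left_block :: "real^('k::finite + 'l::finite) \<Rightarrow> real^'k" where
  "left_block v = (\<chi> \<alpha>. v $ Inl \<alpha>)"

definition right_block :: "real^('k::finite + 'l::finite) \<Rightarrow> real^'l" where
  "right_block v = (\<chi> \<beta>. v $ Inr \<beta>)"

definition block_join :: "real^'k::finite \<Rightarrow> real^'l::finite \<Rightarrow> real^('k + 'l)" where
  "block_join u w = (\<chi> i. case i of Inl \<alpha> \<Rightarrow> u $ \<alpha> | Inr \<beta> \<Rightarrow> w $ \<beta>)"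

lemma left_block_nth [simp]: "left_block v $ \<alpha> = v $ Inl \<alpha>"
  by (simp add: left_block_def)

lemma right_block_nth [simp]: "right_block v $ \<beta> = v $ Inr \<beta>"
  by (simp add: right_block_def)

lemma blocks_zero [simp]: "left_block 0 = 0" "right_block 0 = 0"
  by (simp_all add: vec_eq_iff)

lemma block_join_nth [simp]: "block_join u w $ Inl \<alpha> = u $ \<alpha>" "block_join u w $ Inr \<beta> = w $ \<beta>"
  by (simp_all add: block_join_def)

lemma blocks_block_join [simp]: "left_block (block_join u w) = u" "right_block (block_join u w) = w"
  by (simp_all add: vec_eq_iff)

lemma block_join_blocks [simp]: "block_join (left_block v) (right_block v) = v"
  by (simp add: vec_eq_iff block_join_def split: sum.split)

lemma vec_eq_blocks: "v = v' \<longleftrightarrow> left_block v = left_block v' \<and> right_block v = right_block v'"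
  by (metis block_join_blocks)

lemma sum_UNIV_Plus:
  "(\<Sum>i\<in>(UNIV::('k::finite + 'l::finite) set). f i) = (\<Sum>\<alpha>\<in>UNIV. f (Inl \<alpha>)) + (\<Sum>\<beta>\<in>UNIV. f (Inr \<beta>))"
  using sum.Plus[of "UNIV::'k set" "UNIV::'l set" f] by (simp add: o_def)

lemma sum_conn_nth [simp]:
  "sum_conn G1 G2 z c $ Inl \<alpha> $ Inl \<beta> = G1 z c $ \<alpha> $ \<beta>"
  "sum_conn G1 G2 z c $ Inr \<gamma> $ Inr \<delta> = G2 z c $ \<gamma> $ \<delta>"
  "sum_conn G1 G2 z c $ Inl \<alpha> $ Inr \<delta> = 0"
  "sum_conn G1 G2 z c $ Inr \<gamma> $ Inl \<beta> = 0"
  by (simp_all add: sum_conn_def)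

lemma Dconn_sum_conn:
  "left_block (Dconn (sum_conn G1 G2) \<eta> z c) = Dconn G1 (\<lambda>y. left_block (\<eta> y)) z c"
  "right_block (Dconn (sum_conn G1 G2) \<eta> z c) = Dconn G2 (\<lambda>y. right_block (\<eta> y)) z c"
  by (simp_all add: vec_eq_iff Dconn_def matrix_vector_mult_def sum_UNIV_Plus)

lemma Dwedge_sum_conn:
  "left_block (Dwedge (sum_conn G1 G2) \<phi> z a b) = Dwedge G1 (\<lambda>y c. left_block (\<phi> y c)) z a b"
  "right_block (Dwedge (sum_conn G1 G2) \<phi> z a b) = Dwedge G2 (\<lambda>y c. right_block (\<phi> y c)) z a b"
  by (simp_all add: vec_eq_iff Dwedge_def matrix_vector_mult_def sum_UNIV_Plus)

lemma kappa_sum_conn: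
  "left_block (kappa (sum_conn G1 G2) \<psi> z a b) = kappa G1 (\<lambda>y. left_block (\<psi> y)) z a b"
  "right_block (kappa (sum_conn G1 G2) \<psi> z a b) = kappa G2 (\<lambda>y. right_block (\<psi> y)) z a b"
  by (simp_all add: kappa_def Dwedge_sum_conn Dconn_sum_conn)

lemma curv_sum_conn:
  "left_block (curv (sum_conn G1 G2) z c d *v v) = curv G1 z c d *v left_block v"
  "right_block (curv (sum_conn G1 G2) z c d *v v) = curv G2 z c d *v right_block v"
  by (simp_all add: vec_eq_iff matrix_vector_mult_def curv_def matrix_matrix_mult_def sum_UNIV_Plus pd_const)

lemma curv_kernel_sum_conn:
  "curv_kernel (sum_conn G1 G2) z
     = (\<lambda>(u, w). block_join u w) ` (curv_kernel G1 z \<times> curv_kernel G2 z)"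
proof (intro set_eqI iffI)
  fix v assume v: "v \<in> curv_kernel (sum_conn G1 G2) z"
  have "curv G1 z a b *v left_block v = 0 \<and> curv G2 z a b *v right_block v = 0"
    if "a \<in> Basis" "b \<in> Basis" for a b
    using v that curv_sum_conn[of G1 G2 z a b v] by (simp add: curv_kernel_def)
  then have "(left_block v, right_block v) \<in> curv_kernel G1 z \<times> curv_kernel G2 z"
    by (simp add: curv_kernel_def)
  then show "v \<in> (\<lambda>(u, w). block_join u w) ` (curv_kernel G1 z \<times> curv_kernel G2 z)"
    by (force intro: image_eqI[where x="(left_block v, right_block v)"])
next
  fix v assume "v \<in> (\<lambda>(u, w). block_join u w) ` (curv_kernel G1 z \<times> curv_kernel G2 z)"
  then show "v \<in> curv_kernel (sum_conn G1 G2) z"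
    by (auto simp: curv_kernel_def vec_eq_blocks[of _ 0] curv_sum_conn)
qed

lemma dim_curv_kernel_sum_conn:
  fixes G1 :: "'c::euclidean_space \<Rightarrow> 'c \<Rightarrow> real^'k^'k" and G2 :: "'c \<Rightarrow> 'c \<Rightarrow> real^'l^'l"
  shows "dim (curv_kernel (sum_conn G1 G2) z) = dim (curv_kernel G1 z) + dim (curv_kernel G2 z)"
proof -
  let ?J = "\<lambda>(u, w). block_join u w :: real^('k + 'l)"
  have "linear ?J"
    by (auto simp: linear_iff vec_eq_iff block_join_def split: sum.split)
  moreover have "inj ?J"
    by (rule injI) (metis (no_types, lifting) blocks_block_join case_prod_beta prod.expand)
  ultimately have "dim (?J ` (curv_kernel G1 z \<times> curv_kernel G2 z)) = dim (curv_kernel G1 z \<times> curv_kernel G2 z)"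
    by (intro eucl.dim_image_eq) (auto intro: inj_on_subset)
  also have "\<dots> = dim (curv_kernel G1 z) + dim (curv_kernel G2 z)"
    by (intro eucl.dim_Times subspace_curv_kernel)
  finally show ?thesis by (simp add: curv_kernel_sum_conn)
qed

lemma smooth_connection_sum_conn:
  fixes G1 :: "'c::euclidean_space \<Rightarrow> 'c \<Rightarrow> real^'k^'k" and G2 :: "'c \<Rightarrow> 'c \<Rightarrow> real^'l^'l"
  assumes "smooth_connection Om G1" "smooth_connection Om G2"
  shows "smooth_connection Om (sum_conn G1 G2)"
  unfolding smooth_connection_def
proof (intro ballI allI)
  fix c :: 'c and i j assume c: "c \<in> Basis"
  show "smooth Om (\<lambda>z. sum_conn G1 G2 z c $ i $ j)"
    by (cases i; cases j) (use assms c in \<open>auto simp: smooth_connection_def smooth_const\<close>)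
qed

lemma sum_conn_local_primitive:
  fixes G1 :: "'c::euclidean_space \<Rightarrow> 'c \<Rightarrow> real^'k^'k" and G2 :: "'c \<Rightarrow> 'c \<Rightarrow> real^'l^'l"
  assumes e1: "exact_connection Om G1" and e2: "exact_connection Om G2"
    and V: "open V" "V \<subseteq> Om" and \<phi>: "smooth_form V \<phi>" and \<psi>: "smooth_sec V \<psi>"
    and eq: "\<And>z a b. z \<in> V \<Longrightarrow> a \<in> Basis \<Longrightarrow> b \<in> Basis \<Longrightarrow>
               Dwedge (sum_conn G1 G2) \<phi> z a b = kappa (sum_conn G1 G2) \<psi> z a b"
    and z0: "z0 \<in> V"
  shows "\<exists>W \<eta>. open W \<and> z0 \<in> W \<and> W \<subseteq> V \<and> smooth_sec W \<eta> \<and>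
           (\<forall>z\<in>W. \<forall>c\<in>Basis. \<phi> z c = Dconn (sum_conn G1 G2) \<eta> z c)"
proof -
  have \<phi>1: "smooth_form V (\<lambda>y c. left_block (\<phi> y c))" and \<phi>2: "smooth_form V (\<lambda>y c. right_block (\<phi> y c))"
    using \<phi> by (simp_all add: smooth_form_def smooth_sec_def)
  have \<psi>1: "smooth_sec V (\<lambda>y. left_block (\<psi> y))" and \<psi>2: "smooth_sec V (\<lambda>y. right_block (\<psi> y))"
    using \<psi> by (simp_all add: smooth_sec_def)
  obtain W1 \<eta>1 where W1: "open W1" "z0 \<in> W1" "W1 \<subseteq> V" and \<eta>1: "smooth_sec W1 \<eta>1"
    and prim1: "\<And>z c. z \<in> W1 \<Longrightarrow> c \<in> Basis \<Longrightarrow> left_block (\<phi> z c) = Dconn G1 \<eta>1 z c"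
    using exact_connectionE[OF e1 V \<phi>1 \<psi>1 _ z0] eq Dwedge_sum_conn(1) kappa_sum_conn(1) by metis
  obtain W2 \<eta>2 where W2: "open W2" "z0 \<in> W2" "W2 \<subseteq> V" and \<eta>2: "smooth_sec W2 \<eta>2"
    and prim2: "\<And>z c. z \<in> W2 \<Longrightarrow> c \<in> Basis \<Longrightarrow> right_block (\<phi> z c) = Dconn G2 \<eta>2 z c"
    using exact_connectionE[OF e2 V \<phi>2 \<psi>2 _ z0] eq Dwedge_sum_conn(2) kappa_sum_conn(2) by metis
  define \<eta> where "\<eta> z = block_join (\<eta>1 z) (\<eta>2 z)" for z
  have "smooth_sec (W1 \<inter> W2) \<eta>"
    unfolding smooth_sec_def
  proof
    fix i :: "'k + 'l"
    show "smooth (W1 \<inter> W2) (\<lambda>z. \<eta> z $ i)"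
      using smooth_subset[OF smooth_secD[OF \<eta>1]] smooth_subset[OF smooth_secD[OF \<eta>2]]
      by (cases i) (auto simp: \<eta>_def)
  qed
  moreover have "\<phi> z c = Dconn (sum_conn G1 G2) \<eta> z c" if "z \<in> W1 \<inter> W2" "c \<in> Basis" for z c
    using prim1[of z c] prim2[of z c] that by (simp add: vec_eq_blocks[of "\<phi> z c"] Dconn_sum_conn \<eta>_def)
  ultimately show ?thesis using W1 W2 by (intro exI[of _ "W1 \<inter> W2"] exI[of _ \<eta>]) auto
qed

lemma exact_connection_sum_conn:
  fixes G1 :: "'c::euclidean_space \<Rightarrow> 'c \<Rightarrow> real^'k^'k" and G2 :: "'c \<Rightarrow> 'c \<Rightarrow> real^'l^'l"
  assumes e1: "exact_connection Om G1" and e2: "exact_connection Om G2"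
  shows "exact_connection Om (sum_conn G1 G2)"
proof (rule exact_connectionI)
  show "smooth_connection Om (sum_conn G1 G2)"
    by (rule smooth_connection_sum_conn[OF exact_connectionD(1)[OF e1] exact_connectionD(1)[OF e2]])
  show "curv_rank (sum_conn G1 G2) x = curv_rank (sum_conn G1 G2) y" if "x \<in> Om" "y \<in> Om" for x y
    using dim_curv_kernel_eq[OF exact_connectionD(2)[OF e1 that]]
      dim_curv_kernel_eq[OF exact_connectionD(2)[OF e2 that]]
    by (simp add: curv_rank_curv_kernel dim_curv_kernel_sum_conn)
qed (rule sum_conn_local_primitive[OF e1 e2]; assumption)

theorem proposition2p7:
  fixes U :: "'a::euclidean_space set" and Ub :: "'b::euclidean_space set"
    and \<Gamma> :: "'a \<Rightarrow> 'a \<Rightarrow> real^'k^'k" and \<Gamma>b :: "'b \<Rightarrow> 'b \<Rightarrow> real^'l^'l"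
  assumes "open U" and "open Ub"
    and "exact_connection U \<Gamma>" and "exact_connection Ub \<Gamma>b"
  shows "exact_connection (U \<times> Ub) (pull_fst \<Gamma> :: 'a \<times> 'b \<Rightarrow> _) \<and>
         exact_connection (U \<times> Ub) (pull_snd \<Gamma>b :: 'a \<times> 'b \<Rightarrow> _) \<and>
         exact_connection (U \<times> Ub) (sum_conn (pull_fst \<Gamma> :: 'a \<times> 'b \<Rightarrow> _) (pull_snd \<Gamma>b))"
proof -
  have "exact_connection (U \<times> Ub) (pull_fst \<Gamma> :: 'a \<times> 'b \<Rightarrow> _)"
    using exact_connection_pull_fst[OF assms(1-3)] .
  moreover have "exact_connection (U \<times> Ub) (pull_snd \<Gamma>b :: 'a \<times> 'b \<Rightarrow> _)"
    using exact_connection_pull_snd[OF assms(1,2,4)] .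
  ultimately show ?thesis using exact_connection_sum_conn by blast
qed

end
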